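(* Let $k$, $\varphi$, $b$, $a_1,\dots,a_d$, $u_{a_i}(s)$, $\mathbf V_{\mathfrak r}(s)$, $(M,D_t)$ and $(M_\varphi,D_s)$ be as in the context. For each $i=1,\dots,d$, let $\vec Y_{a_i,1}(t),\dots,\vec Y_{a_i,\mathfrak r}(t)$ be any basis of the space of horizontal elements of $(M,D_t)$ at $a_i$. For $i\in\{1,\dots,d\}$ and $j\in\{1,\dots,\mathfrak r\}$ let $w_{i,j}(s)\in k[[s-b]]^{\mathfrak rd}$ be the vector whose entry in position $(l-1)d+i$ is the $l$-th component of $\vec Y_{a_i,j}(u_{a_i}(s))$ ($l=1,\dots,\mathfrak r$), all other entries being $0$. Then the $\mathfrak rd$ vectors $\mathbf V_{\mathfrak r}(s)\,w_{i,j}(s)$, $1\le i\le d$, $1\le j\le\mathfrak r$, form a basis of the space of horizontal elements of $(M_\varphi,D_s)$ at $b$ (written in coordinates with respect to the basis $e_1,te_1,\dots,t^{d-1}e_1,\dots,t^{d-1}e_{\mathfrak r}$).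
   Context: $k$ is an algebraically closed field complete for a non-archimedean absolute value extending the $p$-adic one on $\mathbb Q_p$. ${\mathscr D}_t^\pm$ denotes the unit disc (open or closed) in coordinate $t$ with ring of analytic functions $\mathcal O_t^\pm$; $\mathcal O_t(a,r^-)$ is the ring of power series in $t-a$ converging on $|t-a|<r$. $\varphi:{\mathscr D}_t^\pm\to{\mathscr D}_s^\pm$ is a finite étale morphism of degree $d$ of unit discs (both open or both closed), $s=f(t)$, $f\in\mathcal O_t^\pm$, $f'$ invertible; $P(s,X)\in\mathcal O_s^\pm[X]$ is the unique monic degree-$d$ polynomial with $P(f(t),t)=0$. Fix $b\in{\mathscr D}_s^\pm(k)$, $\varphi^{-1}(b)=\{a_1,\dots,a_d\}$. $u_{a_i}(s)\in k[[s-b]]$ is the power series with constant term $a_i$ and $P(s,u_{a_i}(s))=0$ (positive radius of convergence). $\mathbf U(s)=(u_{a_i}(s)^{j-1})_{1\le i,j\le d}$, $\mathbf V(s)=\mathbf U(s)^{-1}$, and $\mathbf V_{\mathfrak r}(s)$ is block diagonal with $\mathfrak r$ blocks $\mathbf V(s)$. $(M,D_t)$ is a differential module of rank $\mathfrak r$: a free $\mathcal O_t^\pm$-module with $k$-linear $D_t$ satisfying $D_t(gm)=\frac{dg}{dt}m+gD_t(m)$, with fixed basis $e_1,\dots,e_{\mathfrak r}$. A horizontal element at $a\in{\mathscr D}_t^\pm(k)$ is an element of $\ker D_t$ on $M\otimes\mathcal O_t(a,r^-)$ for some $r>0$, identified with its coordinate vector in $k[[t-a]]^{\mathfrak r}$.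 The direct image $(M_\varphi,D_s)$ is $M$ as an $\mathcal O_s^\pm$-module via $s=f(t)$ with $D_s(m)=\frac{1}{f'(t)}D_t(m)$, with basis $e_1,te_1,\dots,t^{d-1}e_1,e_2,\dots,t^{d-1}e_{\mathfrak r}$; horizontal elements at $b$ are elements of $\ker D_s$ on $M_\varphi\otimes\mathcal O_s(b,r^-)$ for some $r>0$, identified with coordinate vectors in $k[[s-b]]^{\mathfrak rd}$. *)

theory Defs
  imports "HOL-Computational_Algebra.Formal_Power_Series"
          "HOL-Computational_Algebra.Polynomial"
          "HOL-Computational_Algebra.Primes"
begin

definition nonarch_abs :: "('k::field \<Rightarrow> real) \<Rightarrow> bool" where
  "nonarch_abs v \<longleftrightarrow> (\<forall>x. 0 \<le> v x) \<and> (\<forall>x. v x = 0 \<longleftrightarrow> x = 0)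
     \<and> (\<forall>x y. v (x * y) = v x * v y) \<and> (\<forall>x y. v (x + y) \<le> max (v x) (v y))"

definition v_complete :: "('k::field \<Rightarrow> real) \<Rightarrow> bool" where
  "v_complete v \<longleftrightarrow> (\<forall>X::nat \<Rightarrow> 'k.
     (\<forall>e>0. \<exists>N. \<forall>m\<ge>N. \<forall>n\<ge>N. v (X m - X n) < e) \<longrightarrow> (\<exists>L. (\<lambda>n. v (X n - L)) \<longlonglongrightarrow> 0))"

definition alg_closed_field :: "'k::field itself \<Rightarrow> bool" where
  "alg_closed_field _ \<longleftrightarrow> (\<forall>q::'k poly. degree q \<ge> 1 \<longrightarrow> (\<exists>x. poly q x = 0))"

definition extends_padic :: "nat \<Rightarrow> ('k::field_char_0 \<Rightarrow> real) \<Rightarrow> bool" where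
  "extends_padic p v \<longleftrightarrow> prime p \<and>
     (\<forall>n::int. n \<noteq> 0 \<longrightarrow> v (of_int n) = real p powr (- real (multiplicity (int p) n)))"

definition padic_base_field :: "nat \<Rightarrow> ('k::field_char_0 \<Rightarrow> real) \<Rightarrow> bool" where
  "padic_base_field p v \<longleftrightarrow> nonarch_abs v \<and> v_complete v \<and> alg_closed_field TYPE('k)
     \<and> extends_padic p v"

definition psum :: "('k::field \<Rightarrow> real) \<Rightarrow> 'k fps \<Rightarrow> 'k \<Rightarrow> 'k \<Rightarrow> bool" where
  "psum v c z y \<longleftrightarrow> (\<lambda>N. v ((\<Sum>n<N. fps_nth c n * z ^ n) - y)) \<longlonglongrightarrow> 0"

definition feval :: "('k::field \<Rightarrow> real) \<Rightarrow> 'k fps \<Rightarrow> 'k \<Rightarrow> 'k" where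
  "feval v c z = (THE y. psum v c z y)"

definition conv_ball :: "('k::field \<Rightarrow> real) \<Rightarrow> 'k fps \<Rightarrow> real \<Rightarrow> bool" where
  "conv_ball v c \<rho> \<longleftrightarrow> (\<forall>z. v z < \<rho> \<longrightarrow> (\<exists>y. psum v c z y))"

definition disc :: "bool \<Rightarrow> ('k::field \<Rightarrow> real) \<Rightarrow> 'k set" where
  "disc opn v = (if opn then {x. v x < 1} else {x. v x \<le> 1})"

text \<open>The ring of analytic functions on the unit disc, as a subring of k[[t]].\<close>
definition inO :: "bool \<Rightarrow> ('k::field \<Rightarrow> real) \<Rightarrow> 'k fps \<Rightarrow> bool" where
  "inO opn v c \<longleftrightarrow> (if opn
     then (\<forall>\<rho>. 0 < \<rho> \<and> \<rho> < 1 \<longrightarrow> (\<lambda>n. v (fps_nth c n) * \<rho> ^ n) \<longlonglongrightarrow> 0)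
     else (\<lambda>n. v (fps_nth c n)) \<longlonglongrightarrow> 0)"

text \<open>cs j (j<d) in O_s represent g in O_t on the basis 1,t,...,t^(d-1), i.e. g = sum cs_j(f(t)) t^j.\<close>
definition decomp_rel :: "bool \<Rightarrow> ('k::field \<Rightarrow> real) \<Rightarrow> 'k fps \<Rightarrow> nat \<Rightarrow> 'k fps
    \<Rightarrow> (nat \<Rightarrow> 'k fps) \<Rightarrow> bool" where
  "decomp_rel opn v f d g cs \<longleftrightarrow> (\<forall>j\<ge>d. cs j = 0) \<and> (\<forall>j<d. inO opn v (cs j)) \<and>
     (\<forall>x\<in>disc opn v. feval v g x = (\<Sum>j<d. feval v (cs j) (feval v f x) * x ^ j))"

definition decomp :: "bool \<Rightarrow> ('k::field \<Rightarrow> real) \<Rightarrow> 'k fps \<Rightarrow> nat \<Rightarrow> 'k fps \<Rightarrow> nat \<Rightarrow> 'k fps" where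
  "decomp opn v f d g = (THE cs. decomp_rel opn v f d g cs)"

definition finite_etale_disc :: "bool \<Rightarrow> ('k::field \<Rightarrow> real) \<Rightarrow> 'k fps \<Rightarrow> nat \<Rightarrow> bool" where
  "finite_etale_disc opn v f d \<longleftrightarrow> inO opn v f
     \<and> (\<forall>x\<in>disc opn v. feval v f x \<in> disc opn v)
     \<and> (\<exists>g. inO opn v g \<and> g * fps_deriv f = 1)
     \<and> (\<forall>g. inO opn v g \<longrightarrow> (\<exists>!cs. decomp_rel opn v f d g cs))"

definition dinv :: "bool \<Rightarrow> ('k::field \<Rightarrow> real) \<Rightarrow> 'k fps \<Rightarrow> 'k fps" where
  "dinv opn v f = (SOME g. inO opn v g \<and> g * fps_deriv f = 1)"

text \<open>M is free with basis e_0..e_(r-1), D_t(e_l) = sum_m G m l e_m.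
  Horizontal elements at a: coordinate vectors in k[[t-a]]^r.\<close>
definition horiz_t :: "bool \<Rightarrow> ('k::field \<Rightarrow> real) \<Rightarrow> nat \<Rightarrow> (nat \<Rightarrow> nat \<Rightarrow> 'k fps) \<Rightarrow> 'k
    \<Rightarrow> (nat \<Rightarrow> 'k fps) set" where
  "horiz_t opn v r G a = {Y. (\<forall>l\<ge>r. Y l = 0) \<and>
     (\<exists>\<rho>>0. \<rho> \<le> 1 \<and> (\<forall>l<r. conv_ball v (Y l) \<rho>) \<and>
        (\<forall>x. v (x - a) < \<rho> \<longrightarrow> (\<forall>m<r.
           feval v (fps_deriv (Y m)) (x - a) + (\<Sum>l<r. feval v (G m l) x * feval v (Y l) (x - a)) = 0)))}"

text \<open>Matrix of D_s on M_phi in the basis t^i e_l (position l*d+i, 0-based):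
  D_s(t^i e_l) = sum_{m,j} Ds_mat m j l i (s) t^j e_m.\<close>
definition Ds_mat :: "bool \<Rightarrow> ('k::field \<Rightarrow> real) \<Rightarrow> 'k fps \<Rightarrow> nat \<Rightarrow> (nat \<Rightarrow> nat \<Rightarrow> 'k fps)
    \<Rightarrow> nat \<Rightarrow> nat \<Rightarrow> nat \<Rightarrow> nat \<Rightarrow> 'k fps" where
  "Ds_mat opn v f d G m j l i = decomp opn v f d
     (dinv opn v f * (fps_deriv (fps_X ^ i) * (if m = l then 1 else 0) + fps_X ^ i * G m l)) j"

definition horiz_s :: "bool \<Rightarrow> ('k::field \<Rightarrow> real) \<Rightarrow> nat \<Rightarrow> nat \<Rightarrow> 'k fps
    \<Rightarrow> (nat \<Rightarrow> nat \<Rightarrow> 'k fps) \<Rightarrow> 'k \<Rightarrow> (nat \<Rightarrow> 'k fps) set" where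
  "horiz_s opn v r d f G b = {C. (\<forall>q\<ge>r * d. C q = 0) \<and>
     (\<exists>\<rho>>0. \<rho> \<le> 1 \<and> (\<forall>q<r * d. conv_ball v (C q) \<rho>) \<and>
        (\<forall>y. v (y - b) < \<rho> \<longrightarrow> (\<forall>m<r. \<forall>j<d.
           feval v (fps_deriv (C (m * d + j))) (y - b)
           + (\<Sum>l<r. \<Sum>i<d. feval v (Ds_mat opn v f d G m j l i) y * feval v (C (l * d + i)) (y - b))
           = 0)))}"

definition fam_basis :: "(nat \<Rightarrow> 'k::field fps) set \<Rightarrow> ('i \<Rightarrow> nat \<Rightarrow> 'k fps) \<Rightarrow> 'i set \<Rightarrow> bool" where
  "fam_basis S B I \<longleftrightarrow> finite I \<and> (\<forall>x\<in>I. B x \<in> S) \<and>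
     (\<forall>c. (\<forall>l. (\<Sum>x\<in>I. fps_const (c x) * B x l) = 0) \<longrightarrow> (\<forall>x\<in>I. c x = 0)) \<and>
     (\<forall>Y\<in>S. \<exists>c. \<forall>l. Y l = (\<Sum>x\<in>I. fps_const (c x) * B x l))"

definition fps_mat_inv :: "nat \<Rightarrow> (nat \<Rightarrow> nat \<Rightarrow> 'k::field fps) \<Rightarrow> nat \<Rightarrow> nat \<Rightarrow> 'k fps" where
  "fps_mat_inv d U = (SOME V.
     (\<forall>p<d. \<forall>q<d. (\<Sum>k<d. U p k * V k q) = (if p = q then 1 else 0)) \<and>
     (\<forall>p<d. \<forall>q<d. (\<Sum>k<d. V p k * U k q) = (if p = q then 1 else 0)))"

definition blockdiag :: "nat \<Rightarrow> nat \<Rightarrow> (nat \<Rightarrow> nat \<Rightarrow> 'k::field fps) \<Rightarrow> nat \<Rightarrow> nat \<Rightarrow> 'k fps" where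
  "blockdiag d r V = (\<lambda>p q. if p < r * d \<and> q < r * d \<and> p div d = q div d
     then V (p mod d) (q mod d) else 0)"

definition matvec :: "nat \<Rightarrow> (nat \<Rightarrow> nat \<Rightarrow> 'k::field fps) \<Rightarrow> (nat \<Rightarrow> 'k fps) \<Rightarrow> nat \<Rightarrow> 'k fps" where
  "matvec n A w = (\<lambda>p. \<Sum>q<n. A p q * w q)"

text \<open>w_{i,j}: entry l*d+i (0-based) is the l-th component of Y_{a_i,j}(u_{a_i}(s)).\<close>
definition wvec :: "nat \<Rightarrow> nat \<Rightarrow> (nat \<Rightarrow> nat \<Rightarrow> nat \<Rightarrow> 'k::field fps) \<Rightarrow> (nat \<Rightarrow> 'k fps)
    \<Rightarrow> (nat \<Rightarrow> 'k) \<Rightarrow> nat \<Rightarrow> nat \<Rightarrow> nat \<Rightarrow> 'k fps" where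
  "wvec d r Y u a i j = (\<lambda>q. if q < r * d \<and> q mod d = i
     then Y i j (q div d) oo (u i - fps_const (a i)) else 0)"

end

theory Submission
  imports Defs
begin

unbundle fps_syntax

text \<open>
  Over a complete non-archimedean field, convergent power series can be evaluated, multiplied, composed
  and re-expanded around another point as if they were polynomials, and a series vanishing near \<open>0\<close> is
  zero. This turns both notions of horizontal element into formal linear systems of differential
  equations, over \<open>k[[t - a\<^sub>i]]\<close> and over \<open>k[[s - b]]\<close>. Near \<open>a\<^sub>i\<close> the map \<open>s = f(t)\<close> has the
  compositional inverse \<open>t = u\<^sub>i(s)\<close>. Reading a vector \<open>C\<close> of \<open>M\<^sub>\<phi>\<close> on this branch, i.e. forming
  \<open>\<Sum>\<^sub>j C\<^sub>m\<^sub>d\<^sub>+\<^sub>j u\<^sub>i\<^sup>j\<close>, turns the system of \<open>D\<^sub>s\<close> into the system of \<open>D\<^sub>t\<close> pulled back along \<open>u\<^sub>i\<close>;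
  as the Vandermonde matrix \<open>(u\<^sub>i\<^sup>j)\<close> is invertible, this identifies the horizontal elements at
  \<open>b\<close> with the \<open>d\<close>-tuples of horizontal elements at the \<open>a\<^sub>i\<close> composed with \<open>u\<^sub>i\<close>. The vectors
  \<open>V\<^sub>r w\<^sub>i\<^sub>,\<^sub>j\<close> are the preimages of the tuples with \<open>Y\<^sub>a\<^sub>i\<^sub>,\<^sub>j \<circ> u\<^sub>i\<close> in slot \<open>i\<close> and \<open>0\<close>
  elsewhere, hence a basis.
\<close>

lemma tendsto_zero_iff_real:
  fixes f :: "nat \<Rightarrow> real"
  shows "f \<longlonglongrightarrow> 0 \<longleftrightarrow> (\<forall>e>0. \<exists>N. \<forall>n\<ge>N. \<bar>f n\<bar> < e)"
  unfolding LIMSEQ_iff by simp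

lemma tendsto_zero_dominated:
  fixes f g :: "nat \<Rightarrow> real"
  assumes "g \<longlonglongrightarrow> 0" and "\<And>n. n \<ge> M \<Longrightarrow> \<bar>f n\<bar> \<le> g n"
  shows "f \<longlonglongrightarrow> 0"
proof (rule tendsto_0_le[OF assms(1), of _ 1])
  have "\<bar>f n\<bar> \<le> \<bar>g n\<bar>" if "n \<ge> M" for n
    using assms(2)[OF that] by linarith
  then show "\<forall>\<^sub>F n in sequentially. norm (f n) \<le> norm (g n) * 1"
    unfolding eventually_sequentially by auto
qed

lemma tendsto_zero_imp_bounded:
  fixes f :: "nat \<Rightarrow> real"
  assumes "f \<longlonglongrightarrow> 0"
  obtains B where "\<And>n. \<bar>f n\<bar> \<le> B"
  using convergent_imp_Bseq[OF convergentI[OF assms]] that by (metis BseqE real_norm_def)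

lemma tendsto_zero_product_eventually_small:
  fixes \<alpha> \<beta> :: "nat \<Rightarrow> real"
  assumes \<alpha>: "\<alpha> \<longlonglongrightarrow> 0" and \<beta>: "\<beta> \<longlonglongrightarrow> 0" and e: "e > 0"
  obtains N where "\<And>n m. N \<le> n \<or> N \<le> m \<Longrightarrow> \<bar>\<alpha> n\<bar> * \<bar>\<beta> m\<bar> < e"
proof -
  obtain A where A: "\<And>n. \<bar>\<alpha> n\<bar> \<le> A" using tendsto_zero_imp_bounded[OF \<alpha>] by blast
  obtain B where B: "\<And>n. \<bar>\<beta> n\<bar> \<le> B" using tendsto_zero_imp_bounded[OF \<beta>] by blast
  have A0: "A \<ge> 0" and B0: "B \<ge> 0" using A[of 0] B[of 0] by linarith+
  obtain N1 where N1: "\<forall>n\<ge>N1. \<bar>\<alpha> n\<bar> < e / (B + 1)"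
    using \<alpha> e B0 unfolding tendsto_zero_iff_real by (meson add_nonneg_pos divide_pos_pos zero_less_one)
  obtain N2 where N2: "\<forall>n\<ge>N2. \<bar>\<beta> n\<bar> < e / (A + 1)"
    using \<beta> e A0 unfolding tendsto_zero_iff_real by (meson add_nonneg_pos divide_pos_pos zero_less_one)
  have "\<bar>\<alpha> n\<bar> * \<bar>\<beta> m\<bar> < e" if "max N1 N2 \<le> n \<or> max N1 N2 \<le> m" for n m
  proof (cases "N1 \<le> n")
    case True
    have "\<bar>\<alpha> n\<bar> * \<bar>\<beta> m\<bar> \<le> \<bar>\<alpha> n\<bar> * (B + 1)" using B[of m] by (intro mult_left_mono) auto
    also have "\<dots> < e" using N1 True B0 by (simp add: pos_less_divide_eq)
    finally show ?thesis .
  next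
    case False
    then have "N2 \<le> m" using that by auto
    have "\<bar>\<alpha> n\<bar> * \<bar>\<beta> m\<bar> \<le> (A + 1) * \<bar>\<beta> m\<bar>" using A[of n] by (intro mult_right_mono) auto
    also have "\<dots> < e" using N2 \<open>N2 \<le> m\<close> A0 by (simp add: pos_less_divide_eq mult.commute)
    finally show ?thesis .
  qed
  then show ?thesis using that by blast
qed

lemma tendsto_zero_convolution_dominated:
  fixes \<alpha> \<beta> \<gamma> :: "nat \<Rightarrow> real"
  assumes "\<alpha> \<longlonglongrightarrow> 0" "\<beta> \<longlonglongrightarrow> 0"
    and dom: "\<And>n. \<exists>k\<le>n. \<bar>\<gamma> n\<bar> \<le> \<bar>\<alpha> k\<bar> * \<bar>\<beta> (n - k)\<bar>"
  shows "\<gamma> \<longlonglongrightarrow> 0"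
  unfolding tendsto_zero_iff_real
proof (intro allI impI)
  fix e :: real assume "e > 0"
  then obtain N where N: "\<And>n m. N \<le> n \<or> N \<le> m \<Longrightarrow> \<bar>\<alpha> n\<bar> * \<bar>\<beta> m\<bar> < e"
    using tendsto_zero_product_eventually_small[OF assms(1,2) \<open>e > 0\<close>] by blast
  have "\<bar>\<gamma> n\<bar> < e" if "2 * N \<le> n" for n
  proof -
    obtain k where k: "k \<le> n" "\<bar>\<gamma> n\<bar> \<le> \<bar>\<alpha> k\<bar> * \<bar>\<beta> (n - k)\<bar>" using dom by blast
    have "N \<le> k \<or> N \<le> n - k" using that by linarith
    then have "\<bar>\<alpha> k\<bar> * \<bar>\<beta> (n - k)\<bar> < e" by (rule N)
    then show ?thesis using k(2) by linarith
  qed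
  then show "\<exists>N. \<forall>n\<ge>N. \<bar>\<gamma> n\<bar> < e" by blast
qed

lemma sum_lessThan_add:
  fixes a :: "nat \<Rightarrow> 'a::comm_monoid_add"
  shows "sum a {..<N + k} = sum a {..<k} + sum (\<lambda>n. a (n + k)) {..<N}"
proof (induction N)
  case (Suc N)
  have "sum a {..<Suc N + k} = sum a {..<N + k} + a (N + k)" by simp
  then show ?case using Suc by (simp add: add.assoc)
qed simp

lemma index_less_mult: "l < n \<Longrightarrow> i < k \<Longrightarrow> l * k + i < n * (k::nat)"
proof -
  assume "l < n" "i < k"
  then have "l * k + i < Suc l * k" by simp
  also have "\<dots> \<le> n * k" using \<open>l < n\<close> by (intro mult_right_mono) auto
  finally show ?thesis .
qed

locale nonarch_abs_field =
  fixes v :: "'k::field_char_0 \<Rightarrow> real"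
  assumes v_nonneg: "0 \<le> v x"
    and v_eq_0_iff: "v x = 0 \<longleftrightarrow> x = 0"
    and v_mult: "v (x * y) = v x * v y"
    and v_ultra: "v (x + y) \<le> max (v x) (v y)"
    and complete: "v_complete v"
    and v_arbitrarily_small: "e > 0 \<Longrightarrow> \<exists>z. 0 < v z \<and> v z < e"
begin

lemma v_0 [simp]: "v 0 = 0"
  using v_eq_0_iff by simp

lemma v_1 [simp]: "v 1 = 1"
proof -
  have "v 1 * v 1 = v 1" using v_mult[of 1 1] by simp
  moreover have "v 1 \<noteq> 0" using v_eq_0_iff by simp
  ultimately show ?thesis by simp
qed

lemma abs_v [simp]: "\<bar>v x\<bar> = v x"
  using v_nonneg by simp

lemma v_pos: "x \<noteq> 0 \<Longrightarrow> v x > 0"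
  using v_nonneg v_eq_0_iff by (metis less_eq_real_def)

lemma v_minus [simp]: "v (- x) = v x"
proof -
  have "v (-1) * v (-1) = 1" using v_mult[of "-1" "-1"] by simp
  then have "(v (-1) - 1) * (v (-1) + 1) = 0" by (simp add: algebra_simps)
  moreover have "v (-1) + 1 \<noteq> 0" using v_nonneg[of "-1"] by linarith
  ultimately have "v (-1) = 1" by simp
  then show ?thesis using v_mult[of "-1" x] by simp
qed

lemma v_minus_commute: "v (x - y) = v (y - x)"
  by (metis minus_diff_eq v_minus)

lemma v_power: "v (x ^ n) = v x ^ n"
  by (induction n) (simp_all add: v_mult)

lemma v_add_le: "v x \<le> B \<Longrightarrow> v y \<le> B \<Longrightarrow> v (x + y) \<le> B"
  using v_ultra[of x y] by simp

lemma v_add_less: "v x < B \<Longrightarrow> v y < B \<Longrightarrow> v (x + y) < B"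
  using v_ultra[of x y] by simp

lemma v_diff_le: "v x \<le> B \<Longrightarrow> v y \<le> B \<Longrightarrow> v (x - y) \<le> B"
  using v_add_le[of x B "-y"] by simp

lemma v_diff_less: "v x < B \<Longrightarrow> v y < B \<Longrightarrow> v (x - y) < B"
  using v_add_less[of x B "-y"] by simp

lemma v_sum_le: "(\<And>i. i \<in> A \<Longrightarrow> v (f i) \<le> B) \<Longrightarrow> 0 \<le> B \<Longrightarrow> v (sum f A) \<le> B"
  by (induction A rule: infinite_finite_induct) (simp_all add: v_add_le)

lemma v_sum_less: "(\<And>i. i \<in> A \<Longrightarrow> v (f i) < B) \<Longrightarrow> 0 < B \<Longrightarrow> v (sum f A) < B"
  by (induction A rule: infinite_finite_induct) (simp_all add: v_add_less)

lemma v_of_nat_le_1: "v (of_nat n) \<le> 1"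
  by (induction n) (simp_all add: v_add_le)

lemma v_of_nat_mult_le: "v (of_nat n * x) \<le> v x"
  using mult_left_le_one_le[OF v_nonneg v_nonneg v_of_nat_le_1] by (simp add: v_mult)

lemma v_add_eq_left: "v y < v x \<Longrightarrow> v (x + y) = v x"
  using v_ultra[of x y] v_ultra[of "x + y" "-y"] by auto

lemma v_sum_le_max:
  assumes "finite A" "A \<noteq> {}"
  obtains i where "i \<in> A" "v (sum f A) \<le> v (f i)"
proof -
  have "Max ((\<lambda>j. v (f j)) ` A) \<in> (\<lambda>j. v (f j)) ` A" using assms by (intro Max_in) auto
  then obtain i where i: "i \<in> A" "v (f i) = Max ((\<lambda>j. v (f j)) ` A)" by auto
  have "v (sum f A) \<le> v (f i)"
  proof (rule v_sum_le)
    fix j assume "j \<in> A"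
    then show "v (f j) \<le> v (f i)" unfolding i(2) using assms by (intro Max_ge) auto
  qed (rule v_nonneg)
  then show ?thesis using that i(1) by blast
qed

definition v_sums :: "(nat \<Rightarrow> 'k) \<Rightarrow> 'k \<Rightarrow> bool" where
  "v_sums a y \<longleftrightarrow> (\<lambda>N. v (sum a {..<N} - y)) \<longlonglongrightarrow> 0"

lemma v_sums_unique:
  assumes "v_sums a y" "v_sums a y'"
  shows "y = y'"
proof (rule ccontr)
  assume "y \<noteq> y'"
  then have e: "v (y - y') > 0" using v_pos by simp
  obtain N1 where N1: "\<forall>n\<ge>N1. v (sum a {..<n} - y) < v (y - y')"
    using assms(1) e unfolding v_sums_def tendsto_zero_iff_real by auto
  obtain N2 where N2: "\<forall>n\<ge>N2. v (sum a {..<n} - y') < v (y - y')"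
    using assms(2) e unfolding v_sums_def tendsto_zero_iff_real by auto
  let ?s = "sum a {..<max N1 N2}"
  have "v (y - y') = v ((?s - y') - (?s - y))" by (simp add: algebra_simps)
  also have "\<dots> < v (y - y')" by (rule v_diff_less) (use N1 N2 in auto)
  finally show False by simp
qed

lemma v_sums_exists:
  assumes "(\<lambda>n. v (a n)) \<longlonglongrightarrow> 0"
  obtains y where "v_sums a y"
proof -
  have partial_sums: "sum a {..<m} - sum a {..<n} = sum a {n..<m}" if "n \<le> m" for m n
    using sum_diff_nat_ivl[of 0 n m a] that by (simp add: atLeast0LessThan)
  have "\<forall>e>0. \<exists>N. \<forall>m\<ge>N. \<forall>n\<ge>N. v (sum a {..<m} - sum a {..<n}) < e"
  proof (intro allI impI)
    fix e :: real assume "e > 0"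
    then obtain N where N: "\<forall>n\<ge>N. v (a n) < e" using assms unfolding tendsto_zero_iff_real by auto
    have close: "v (sum a {..<m} - sum a {..<n}) < e" if "n \<le> m" "n \<ge> N" for m n
      unfolding partial_sums[OF that(1)] using N that \<open>e > 0\<close> by (intro v_sum_less) auto
    have "v (sum a {..<m} - sum a {..<n}) < e" if "m \<ge> N" "n \<ge> N" for m n
    proof (cases "n \<le> m")
      case False
      then show ?thesis using close[of m n] that by (simp add: v_minus_commute)
    qed (use close that in auto)
    then show "\<exists>N. \<forall>m\<ge>N. \<forall>n\<ge>N. v (sum a {..<m} - sum a {..<n}) < e" by blast
  qed
  then obtain L where "(\<lambda>n. v (sum a {..<n} - L)) \<longlonglongrightarrow> 0"
    using complete[unfolded v_complete_def, rule_format, of "\<lambda>n. sum a {..<n}"] by blast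
  then show ?thesis using that unfolding v_sums_def by blast
qed

lemma v_sums_terms_tendsto_zero:
  assumes "v_sums a y"
  shows "(\<lambda>n. v (a n)) \<longlonglongrightarrow> 0"
  unfolding tendsto_zero_iff_real
proof (intro allI impI)
  fix e :: real assume "e > 0"
  then obtain N where N: "\<forall>n\<ge>N. v (sum a {..<n} - y) < e"
    using assms unfolding v_sums_def tendsto_zero_iff_real by auto
  have "v (a n) = v ((sum a {..<Suc n} - y) - (sum a {..<n} - y))" for n by simp
  then have "v (a n) < e" if "n \<ge> N" for n
    using N that by (metis le_Suc_eq v_diff_less)
  then show "\<exists>N. \<forall>n\<ge>N. \<bar>v (a n)\<bar> < e" by auto
qed

lemma v_sums_iff_terms: "(\<exists>y. v_sums a y) \<longleftrightarrow> (\<lambda>n. v (a n)) \<longlonglongrightarrow> 0"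
  using v_sums_exists v_sums_terms_tendsto_zero by metis

lemma v_sums_le:
  assumes "v_sums a y" "\<And>n. v (a n) \<le> B"
  shows "v y \<le> B"
proof (rule ccontr)
  assume "\<not> v y \<le> B"
  then have e: "v y - B > 0" by simp
  then obtain N where "\<forall>n\<ge>N. v (sum a {..<n} - y) < v y - B"
    using assms(1) e unfolding v_sums_def tendsto_zero_iff_real abs_v by blast
  then have N: "v (sum a {..<N} - y) < v y - B" by simp
  have B0: "0 \<le> B" using assms(2)[of 0] v_nonneg[of "a 0"] by linarith
  have "v (sum a {..<N}) \<le> B" using assms(2) B0 by (intro v_sum_le) auto
  then have "v (sum a {..<N} - (sum a {..<N} - y)) \<le> max B (v (sum a {..<N} - y))"
    by (rule_tac v_diff_le) auto
  then have "v y \<le> B \<or> v y \<le> v (sum a {..<N} - y)" by (simp add: le_max_iff_disj)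
  then show False using B0 N \<open>\<not> v y \<le> B\<close> by linarith
qed

lemma v_sums_add:
  assumes "v_sums a y" "v_sums b z"
  shows "v_sums (\<lambda>n. a n + b n) (y + z)"
proof -
  have lim: "(\<lambda>N. max (v (sum a {..<N} - y)) (v (sum b {..<N} - z))) \<longlonglongrightarrow> 0"
    using tendsto_max[OF assms[unfolded v_sums_def]] by simp
  have eq: "sum (\<lambda>n. a n + b n) {..<N} - (y + z) = (sum a {..<N} - y) + (sum b {..<N} - z)" for N
    by (simp add: sum.distrib)
  show ?thesis
    unfolding v_sums_def by (intro tendsto_zero_dominated[OF lim, where M = 0]) (simp only: eq abs_v v_ultra)
qed

lemma v_sums_cmult:
  assumes "v_sums a y"
  shows "v_sums (\<lambda>n. c * a n) (c * y)"
proof -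
  have "sum (\<lambda>n. c * a n) {..<N} - c * y = c * (sum a {..<N} - y)" for N
    by (simp add: sum_distrib_left right_diff_distrib)
  then show ?thesis
    using tendsto_mult_right_zero[OF assms[unfolded v_sums_def], of "v c"]
    unfolding v_sums_def by (simp add: v_mult)
qed

lemma v_sums_minus: "v_sums a y \<Longrightarrow> v_sums (\<lambda>n. - a n) (- y)"
  using v_sums_cmult[of a y "-1"] by simp

lemma v_sums_finite:
  assumes "\<And>n. n \<ge> N \<Longrightarrow> a n = 0"
  shows "v_sums a (sum a {..<N})"
proof -
  have tail: "sum a {..<n} - sum a {..<N} = 0" if "n \<ge> N" for n
  proof -
    have "sum a {..<n} = sum a {..<N} + sum a {N..<n}"
      using sum.atLeastLessThan_concat[of 0 N n a] that by (simp add: atLeast0LessThan)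
    also have "sum a {N..<n} = 0" using assms by (intro sum.neutral) auto
    finally show ?thesis by simp
  qed
  have "(\<lambda>_. 0 :: real) \<longlonglongrightarrow> 0" by simp
  then show ?thesis unfolding v_sums_def
    by (rule tendsto_zero_dominated[where M = N]) (simp add: tail)
qed

lemma v_sums_shift:
  assumes "v_sums a y"
  shows "v_sums (\<lambda>n. a (n + k)) (y - sum a {..<k})"
proof -
  have eq: "sum (\<lambda>n. a (n + k)) {..<N} - (y - sum a {..<k}) = sum a {..<N + k} - y" for N
    using sum_lessThan_add[of a N k] by (simp add: algebra_simps)
  show ?thesis
    unfolding v_sums_def eq by (rule LIMSEQ_ignore_initial_segment[OF assms[unfolded v_sums_def]])
qed

lemma v_sums_unshift:
  assumes "v_sums (\<lambda>n. a (n + k)) z"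
  shows "v_sums a (z + sum a {..<k})"
proof -
  have eq: "sum a {..<N + k} - (z + sum a {..<k}) = sum (\<lambda>n. a (n + k)) {..<N} - z" for N
    using sum_lessThan_add[of a N k] by (simp add: algebra_simps)
  show ?thesis
    unfolding v_sums_def by (rule LIMSEQ_offset[of _ k]) (use assms in \<open>simp add: v_sums_def eq\<close>)
qed

lemma v_sums_tail_le:
  assumes "v_sums a y" "\<And>n. n \<ge> k \<Longrightarrow> v (a n) \<le> B"
  shows "v (y - sum a {..<k}) \<le> B"
  by (rule v_sums_le[OF v_sums_shift[OF assms(1)]]) (simp add: assms(2))

definition v_null_double :: "(nat \<Rightarrow> nat \<Rightarrow> 'k) \<Rightarrow> bool" where
  "v_null_double a \<longleftrightarrow> (\<forall>e>0. \<exists>N. \<forall>n m. N \<le> n \<or> N \<le> m \<longrightarrow> v (a n m) < e)"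

lemma v_null_double_transpose: "v_null_double a \<Longrightarrow> v_null_double (\<lambda>m n. a n m)"
  unfolding v_null_double_def by meson

lemma v_null_double_row_sums:
  assumes a: "v_null_double a" and rows: "\<And>n. v_sums (a n) (R n)"
  shows "(\<lambda>n. v (R n)) \<longlonglongrightarrow> 0"
  unfolding tendsto_zero_iff_real
proof (intro allI impI)
  fix e :: real assume "e > 0"
  then obtain N where N: "\<forall>n m. N \<le> n \<or> N \<le> m \<longrightarrow> v (a n m) < e / 2"
    using a unfolding v_null_double_def by (meson half_gt_zero)
  have "v (R n) \<le> e / 2" if "n \<ge> N" for n
    using N that by (intro v_sums_le[OF rows]) (simp add: less_imp_le)
  then show "\<exists>N. \<forall>n\<ge>N. \<bar>v (R n)\<bar> < e" using \<open>e > 0\<close> by force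
qed

text \<open>Fubini for double series whose terms tend to zero in both indices jointly: truncating both
  iterated sums at the same large \<open>K\<close> leaves four tails, each small by the ultrametric inequality.\<close>

lemma v_sums_iterated_eq:
  assumes a: "v_null_double a"
    and rows: "\<And>n. v_sums (a n) (R n)" and cols: "\<And>m. v_sums (\<lambda>n. a n m) (C m)"
    and Y: "v_sums R Y" and Y': "v_sums C Y'"
  shows "Y = Y'"
proof (rule ccontr)
  assume "Y \<noteq> Y'"
  define e where "e = v (Y - Y') / 2"
  have e: "e > 0" using \<open>Y \<noteq> Y'\<close> v_pos unfolding e_def by simp
  obtain N where N: "\<forall>n m. N \<le> n \<or> N \<le> m \<longrightarrow> v (a n m) < e"
    using a e unfolding v_null_double_def by blast
  obtain N1 where N1: "\<forall>n\<ge>N1. v (R n) < e"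
    using v_null_double_row_sums[OF a rows] e unfolding tendsto_zero_iff_real by fastforce
  obtain N2 where N2: "\<forall>m\<ge>N2. v (C m) < e"
    using v_null_double_row_sums[OF v_null_double_transpose[OF a] cols] e
    unfolding tendsto_zero_iff_real by fastforce
  define K where "K = max N (max N1 N2)"
  define t where "t n = R n - sum (a n) {..<K}" for n
  define s where "s m = C m - (\<Sum>n<K. a n m)" for m
  have t: "v (t n) \<le> e" for n unfolding t_def
    using N e by (intro v_sums_tail_le[OF rows]) (auto simp: K_def less_imp_le)
  have s: "v (s m) \<le> e" for m unfolding s_def
    using N e by (intro v_sums_tail_le[OF cols]) (auto simp: K_def less_imp_le)
  have T1: "v (Y - sum R {..<K}) \<le> e"
    using N1 e by (intro v_sums_tail_le[OF Y]) (auto simp: K_def less_imp_le)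
  have T2: "v (Y' - sum C {..<K}) \<le> e"
    using N2 e by (intro v_sums_tail_le[OF Y']) (auto simp: K_def less_imp_le)
  have "Y - Y' = ((Y - sum R {..<K}) - (Y' - sum C {..<K})) + (sum t {..<K} - sum s {..<K})"
    unfolding t_def s_def sum_subtractf sum.swap[of a "{..<K}" "{..<K}"] by simp
  also have "v \<dots> \<le> e"
  proof -
    have "v (sum t {..<K}) \<le> e" "v (sum s {..<K}) \<le> e"
      using t s e by (auto intro!: v_sum_le)
    then show ?thesis using T1 T2 by (blast intro: v_add_le v_diff_le)
  qed
  finally show False using e unfolding e_def by simp
qed

lemma v_sums_swap:
  assumes a: "v_null_double a"
    and rows: "\<And>n. v_sums (a n) (R n)" and cols: "\<And>m. v_sums (\<lambda>n. a n m) (C m)"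
  obtains Y where "v_sums R Y" "v_sums C Y"
proof -
  obtain Y where Y: "v_sums R Y"
    using v_sums_exists[OF v_null_double_row_sums[OF a rows]] .
  obtain Y' where Y': "v_sums C Y'"
    using v_sums_exists[OF v_null_double_row_sums[OF v_null_double_transpose[OF a] cols]] .
  show ?thesis using that Y Y' v_sums_iterated_eq[OF a rows cols Y Y'] by blast
qed

lemma v_sums_cauchy_product:
  assumes x: "v_sums x X" and y: "v_sums y Y"
  shows "v_sums (\<lambda>n. \<Sum>k\<le>n. x k * y (n - k)) (X * Y)"
proof -
  define a where "a k n = (if k \<le> n then x k * y (n - k) else 0)" for k n
  have rows: "v_sums (a k) (x k * Y)" for k
  proof -
    have "v_sums (\<lambda>n. a k (n + k)) (x k * Y)"
      using v_sums_cmult[OF y, of "x k"] unfolding a_def by simp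
    from v_sums_unshift[OF this] show ?thesis unfolding a_def by simp
  qed
  have cols: "v_sums (\<lambda>k. a k n) (\<Sum>k\<le>n. x k * y (n - k))" for n
    using v_sums_finite[of "Suc n" "\<lambda>k. a k n"] unfolding a_def lessThan_Suc_atMost by simp
  have "v_null_double a"
    unfolding v_null_double_def
  proof (intro allI impI)
    fix e :: real assume "e > 0"
    then obtain N where N: "\<And>n m. N \<le> n \<or> N \<le> m \<Longrightarrow> \<bar>v (x n)\<bar> * \<bar>v (y m)\<bar> < e"
      using tendsto_zero_product_eventually_small[OF v_sums_terms_tendsto_zero[OF x]
        v_sums_terms_tendsto_zero[OF y] \<open>e > 0\<close>] by blast
    have "v (a n m) < e" if "2 * N \<le> n \<or> 2 * N \<le> m" for n m
    proof (cases "n \<le> m")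
      case True
      then have "N \<le> n \<or> N \<le> m - n" using that by linarith
      then show ?thesis using N True unfolding a_def by (simp add: v_mult)
    qed (simp add: a_def \<open>e > 0\<close>)
    then show "\<exists>N. \<forall>n m. N \<le> n \<or> N \<le> m \<longrightarrow> v (a n m) < e" by blast
  qed
  then obtain Z where Z: "v_sums (\<lambda>k. x k * Y) Z" "v_sums (\<lambda>n. \<Sum>k\<le>n. x k * y (n - k)) Z"
    using v_sums_swap[OF _ rows cols] by blast
  have "v_sums (\<lambda>k. x k * Y) (X * Y)" using v_sums_cmult[OF x, of Y] by (simp add: mult.commute)
  then show ?thesis using Z v_sums_unique by blast
qed

section \<open>Convergent power series\<close>

definition fps_decays :: "'k fps \<Rightarrow> real \<Rightarrow> bool" where
  "fps_decays c \<rho> \<longleftrightarrow> (\<lambda>n. v (c $ n) * \<rho> ^ n) \<longlonglongrightarrow> 0"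

lemma fps_decays_finite: "(\<And>n. n \<ge> N \<Longrightarrow> c $ n = 0) \<Longrightarrow> fps_decays c \<rho>"
  unfolding fps_decays_def by (rule tendsto_zero_dominated[OF tendsto_const, where M = N]) simp

lemma fps_decays_mono:
  assumes "fps_decays c \<rho>" "0 \<le> \<rho>'" "\<rho>' \<le> \<rho>"
  shows "fps_decays c \<rho>'"
  using assms(1) unfolding fps_decays_def
  by (rule tendsto_zero_dominated[where M = 0]) (use assms(2,3) in \<open>simp add: mult_left_mono power_mono v_nonneg\<close>)

lemma fps_decays_add:
  assumes "0 \<le> \<rho>" "fps_decays c \<rho>" "fps_decays d \<rho>"
  shows "fps_decays (c + d) \<rho>"
proof -
  have "(\<lambda>n. max (v (c $ n) * \<rho> ^ n) (v (d $ n) * \<rho> ^ n)) \<longlonglongrightarrow> 0"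
    using tendsto_max[OF assms(2,3)[unfolded fps_decays_def]] by simp
  then show ?thesis unfolding fps_decays_def
  proof (rule tendsto_zero_dominated[where M = 0])
    fix n
    have "v ((c + d) $ n) * \<rho> ^ n \<le> max (v (c $ n)) (v (d $ n)) * \<rho> ^ n"
      using v_ultra[of "c $ n" "d $ n"] assms(1) by (simp add: mult_right_mono)
    then show "\<bar>v ((c + d) $ n) * \<rho> ^ n\<bar> \<le> max (v (c $ n) * \<rho> ^ n) (v (d $ n) * \<rho> ^ n)"
      using assms(1) by (simp add: max_mult_distrib_right abs_mult)
  qed
qed

lemma fps_decays_mult:
  assumes "0 \<le> \<rho>" "fps_decays c \<rho>" "fps_decays d \<rho>"
  shows "fps_decays (c * d) \<rho>"
  unfolding fps_decays_def
proof (rule tendsto_zero_convolution_dominated[OF assms(2,3)[unfolded fps_decays_def]])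
  fix n
  obtain k where k: "k \<in> {0..n}" "v ((c * d) $ n) \<le> v (c $ k * d $ (n - k))"
    using v_sum_le_max[of "{0..n}" "\<lambda>k. c $ k * d $ (n - k)"] by (auto simp: fps_mult_nth)
  have "\<rho> ^ n = \<rho> ^ k * \<rho> ^ (n - k)" using k(1) by (simp add: power_add[symmetric])
  then have "v ((c * d) $ n) * \<rho> ^ n \<le> (v (c $ k) * \<rho> ^ k) * (v (d $ (n - k)) * \<rho> ^ (n - k))"
    using mult_right_mono[OF k(2), of "\<rho> ^ n"] assms(1) by (simp add: v_mult mult_ac)
  then show "\<exists>k\<le>n. \<bar>v ((c * d) $ n) * \<rho> ^ n\<bar>
      \<le> \<bar>v (c $ k) * \<rho> ^ k\<bar> * \<bar>v (d $ (n - k)) * \<rho> ^ (n - k)\<bar>"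
    using k(1) assms(1) by (intro exI[of _ k]) (simp add: abs_mult)
qed

text \<open>Differentiation does not shrink the radius because \<open>v (of_nat n) \<le> 1\<close>.\<close>

lemma fps_decays_deriv:
  assumes "0 < \<rho>" "fps_decays c \<rho>"
  shows "fps_decays (fps_deriv c) \<rho>"
proof -
  have "(\<lambda>n. inverse \<rho> * (v (c $ (n + 1)) * \<rho> ^ (n + 1))) \<longlonglongrightarrow> 0"
    using LIMSEQ_ignore_initial_segment[OF assms(2)[unfolded fps_decays_def], of 1]
    by (rule tendsto_mult_right_zero)
  then show ?thesis unfolding fps_decays_def
  proof (rule tendsto_zero_dominated[where M = 0])
    fix n
    have "v (fps_deriv c $ n) = v (of_nat (Suc n) * c $ (n + 1))" by simp
    also have "\<dots> \<le> v (c $ (n + 1))" by (rule v_of_nat_mult_le)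
    finally show "\<bar>v (fps_deriv c $ n) * \<rho> ^ n\<bar> \<le> inverse \<rho> * (v (c $ (n + 1)) * \<rho> ^ (n + 1))"
      using assms(1) by (simp add: abs_mult mult_right_mono field_simps)
  qed
qed

definition fps_conv_at :: "'k fps \<Rightarrow> 'k \<Rightarrow> bool" where
  "fps_conv_at c z \<longleftrightarrow> (\<lambda>n. v (c $ n * z ^ n)) \<longlonglongrightarrow> 0"

lemma psum_iff_v_sums: "psum v c z y \<longleftrightarrow> v_sums (\<lambda>n. c $ n * z ^ n) y"
  unfolding psum_def v_sums_def by simp

lemma fps_conv_at_iff_psum: "fps_conv_at c z \<longleftrightarrow> (\<exists>y. psum v c z y)"
  unfolding psum_iff_v_sums fps_conv_at_def v_sums_iff_terms by simp

lemma conv_ball_iff: "conv_ball v c \<rho> \<longleftrightarrow> (\<forall>z. v z < \<rho> \<longrightarrow> fps_conv_at c z)"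
  unfolding conv_ball_def fps_conv_at_iff_psum by simp

lemma feval_eqI: "v_sums (\<lambda>n. c $ n * z ^ n) y \<Longrightarrow> feval v c z = y"
  unfolding feval_def psum_iff_v_sums using v_sums_unique by blast

lemma v_sums_feval: "fps_conv_at c z \<Longrightarrow> v_sums (\<lambda>n. c $ n * z ^ n) (feval v c z)"
  using feval_eqI fps_conv_at_iff_psum psum_iff_v_sums by metis

lemma fps_conv_at_iff_decays: "fps_conv_at c z \<longleftrightarrow> fps_decays c (v z)"
  unfolding fps_conv_at_def fps_decays_def by (simp add: v_mult v_power)

lemma fps_conv_at_finite: "(\<And>n. n \<ge> N \<Longrightarrow> c $ n = 0) \<Longrightarrow> fps_conv_at c z"
  unfolding fps_conv_at_iff_decays by (rule fps_decays_finite)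

lemma feval_finite: "(\<And>n. n \<ge> N \<Longrightarrow> c $ n = 0) \<Longrightarrow> feval v c z = (\<Sum>n<N. c $ n * z ^ n)"
  using v_sums_finite[of N "\<lambda>n. c $ n * z ^ n"] feval_eqI by simp

lemma fps_conv_at_zero: "fps_conv_at c 0"
  by (rule fps_conv_at_iff_psum[THEN iffD2], rule exI[of _ "c $ 0"])
    (use v_sums_finite[of 1 "\<lambda>n. c $ n * 0 ^ n"] in \<open>simp add: psum_iff_v_sums\<close>)

lemma feval_at_zero: "feval v c 0 = c $ 0"
  using feval_finite[of 1 "fps_const (c $ 0)" 0] v_sums_finite[of 1 "\<lambda>n. c $ n * 0 ^ n"] feval_eqI
  by simp

lemma fps_conv_at_mono: "fps_conv_at c z \<Longrightarrow> v w \<le> v z \<Longrightarrow> fps_conv_at c w"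
  unfolding fps_conv_at_iff_decays by (erule fps_decays_mono) (simp_all add: v_nonneg)

lemma fps_conv_at_add: "fps_conv_at c z \<Longrightarrow> fps_conv_at d z \<Longrightarrow> fps_conv_at (c + d) z"
  unfolding fps_conv_at_iff_decays by (rule fps_decays_add[OF v_nonneg])

lemma fps_conv_at_minus: "fps_conv_at c z \<Longrightarrow> fps_conv_at (- c) z"
  unfolding fps_conv_at_def by simp

lemma fps_conv_at_diff: "fps_conv_at c z \<Longrightarrow> fps_conv_at d z \<Longrightarrow> fps_conv_at (c - d) z"
  using fps_conv_at_add[of c z "- d"] fps_conv_at_minus[of d z] by simp

lemma fps_conv_at_const: "fps_conv_at (fps_const a) z"
  by (rule fps_conv_at_finite[of 1]) simp

lemma fps_conv_at_X: "fps_conv_at fps_X z"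
  by (rule fps_conv_at_finite[of 2]) (simp add: fps_X_def)

lemma fps_conv_at_0: "fps_conv_at 0 z" and fps_conv_at_1: "fps_conv_at 1 z"
  using fps_conv_at_const[of 0 z] fps_conv_at_const[of 1 z] by simp_all

lemma fps_mult_nth_mult_power:
  "(c * d) $ n * z ^ n = (\<Sum>k\<le>n. (c $ k * z ^ k) * (d $ (n - k) * (z::'k) ^ (n - k)))"
  unfolding fps_mult_nth atLeast0AtMost sum_distrib_right
  by (rule sum.cong) (simp_all add: algebra_simps power_add[symmetric])

lemma v_sums_feval_mult:
  "fps_conv_at c z \<Longrightarrow> fps_conv_at d z \<Longrightarrow> v_sums (\<lambda>n. (c * d) $ n * z ^ n) (feval v c z * feval v d z)"
  unfolding fps_mult_nth_mult_power by (rule v_sums_cauchy_product) (simp_all add: v_sums_feval)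

lemma fps_conv_at_mult: "fps_conv_at c z \<Longrightarrow> fps_conv_at d z \<Longrightarrow> fps_conv_at (c * d) z"
  using v_sums_terms_tendsto_zero[OF v_sums_feval_mult] unfolding fps_conv_at_def by blast

lemma feval_mult: "fps_conv_at c z \<Longrightarrow> fps_conv_at d z \<Longrightarrow> feval v (c * d) z = feval v c z * feval v d z"
  using v_sums_feval_mult feval_eqI by blast

lemma feval_add: "fps_conv_at c z \<Longrightarrow> fps_conv_at d z \<Longrightarrow> feval v (c + d) z = feval v c z + feval v d z"
  using v_sums_add[OF v_sums_feval v_sums_feval] feval_eqI by (simp add: distrib_right)

lemma feval_minus: "fps_conv_at c z \<Longrightarrow> feval v (- c) z = - feval v c z"
  using v_sums_minus[OF v_sums_feval] feval_eqI by simp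

lemma feval_diff: "fps_conv_at c z \<Longrightarrow> fps_conv_at d z \<Longrightarrow> feval v (c - d) z = feval v c z - feval v d z"
  using feval_add[of c z "- d"] feval_minus[of d z] fps_conv_at_minus[of d z] by simp

lemma feval_const: "feval v (fps_const a) z = a"
  using feval_finite[of 1 "fps_const a" z] by simp

lemma feval_X: "feval v fps_X z = z"
  using feval_finite[of 2 fps_X z] by (simp add: fps_X_def numeral_2_eq_2)

lemma feval_0: "feval v 0 z = 0" and feval_1: "feval v 1 z = 1"
  using feval_const[of 0 z] feval_const[of 1 z] by simp_all

lemma fps_conv_at_power: "fps_conv_at c z \<Longrightarrow> fps_conv_at (c ^ n) z"
  by (induction n) (simp_all add: fps_conv_at_1 fps_conv_at_mult)

lemma feval_power: "fps_conv_at c z \<Longrightarrow> feval v (c ^ n) z = feval v c z ^ n"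
  by (induction n) (simp_all add: feval_1 feval_mult fps_conv_at_power)

lemma fps_conv_at_sum: "(\<And>i. i \<in> I \<Longrightarrow> fps_conv_at (f i) z) \<Longrightarrow> fps_conv_at (\<Sum>i\<in>I. f i) z"
  by (induction I rule: infinite_finite_induct) (simp_all add: fps_conv_at_0 fps_conv_at_add)

lemma feval_sum:
  "(\<And>i. i \<in> I \<Longrightarrow> fps_conv_at (f i) z) \<Longrightarrow> feval v (\<Sum>i\<in>I. f i) z = (\<Sum>i\<in>I. feval v (f i) z)"
  by (induction I rule: infinite_finite_induct) (simp_all add: feval_0 feval_add fps_conv_at_sum)

lemma feval_sum_mult:
  assumes "\<And>i. i \<in> I \<Longrightarrow> fps_conv_at (c i) z" "\<And>i. i \<in> I \<Longrightarrow> fps_conv_at (e i) z"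
  shows "fps_conv_at (\<Sum>i\<in>I. c i * e i) z"
    "feval v (\<Sum>i\<in>I. c i * e i) z = (\<Sum>i\<in>I. feval v (c i) z * feval v (e i) z)"
  using assms by (simp_all add: fps_conv_at_sum fps_conv_at_mult feval_sum feval_mult)

lemma feval_monic_poly:
  assumes "\<And>j. j < d \<Longrightarrow> fps_conv_at (q j) z" "fps_conv_at x z"
  shows "fps_conv_at ((\<Sum>j<d. q j * x ^ j) + x ^ d) z"
    "feval v ((\<Sum>j<d. q j * x ^ j) + x ^ d) z = (\<Sum>j<d. feval v (q j) z * feval v x z ^ j) + feval v x z ^ d"
  using feval_sum_mult[of "{..<d}" q z "\<lambda>j. x ^ j"] assms
  by (simp_all add: fps_conv_at_add fps_conv_at_power feval_add feval_power)

lemma fps_conv_at_deriv: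
  assumes "fps_conv_at c z"
  shows "fps_conv_at (fps_deriv c) z"
proof (cases "z = 0")
  case False
  then show ?thesis
    using fps_decays_deriv[OF v_pos[OF False]] assms unfolding fps_conv_at_iff_decays by blast
qed (simp add: fps_conv_at_zero)

section \<open>Germs at \<open>0\<close> and the identity theorem\<close>

definition v_near0 :: "'k filter" where
  "v_near0 = (INF \<rho>\<in>{0<..}. principal {z. v z < \<rho>})"

lemma eventually_v_near0: "eventually P v_near0 \<longleftrightarrow> (\<exists>\<rho>>0. \<forall>z. v z < \<rho> \<longrightarrow> P z)"
  unfolding v_near0_def
proof (subst eventually_INF_base)
  show "\<exists>x\<in>{0<..}. principal {z. v z < x} \<le> inf (principal {z. v z < a}) (principal {z. v z < b})"
    if "a \<in> {0<..}" "b \<in> {0<..}" for a b :: real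
    using that by (intro bexI[of _ "min a b"]) auto
qed (auto simp: eventually_principal)

lemma eventually_v_near0_le_1:
  "eventually P v_near0 \<longleftrightarrow> (\<exists>\<rho>>0. \<rho> \<le> 1 \<and> (\<forall>z. v z < \<rho> \<longrightarrow> P z))"
  unfolding eventually_v_near0 by (metis min.cobounded1 min.cobounded2 min_less_iff_conj order.strict_trans2 zero_less_one)

lemma eventually_v_less_v_near0: "0 < \<rho> \<Longrightarrow> \<forall>\<^sub>F z in v_near0. v z < \<rho>"
  unfolding eventually_v_near0 by blast

lemma eventually_v_near0_nonzero_witness:
  assumes "eventually P v_near0"
  obtains z where "0 < v z" "P z"
  using assms v_arbitrarily_small unfolding eventually_v_near0 by blast

lemma conv_ball_condition_iff_eventually:
  "(\<exists>\<rho>>0. \<rho> \<le> 1 \<and> (\<forall>l<N. conv_ball v (C l) \<rho>) \<and> (\<forall>x. v (x - \<alpha>) < \<rho> \<longrightarrow> Q x))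
    \<longleftrightarrow> (\<forall>\<^sub>F z in v_near0. (\<forall>l<N. fps_conv_at (C l) z) \<and> Q (\<alpha> + z))"
proof -
  have shift: "(\<forall>x. v (x - \<alpha>) < \<rho> \<longrightarrow> Q x) \<longleftrightarrow> (\<forall>z. v z < \<rho> \<longrightarrow> Q (\<alpha> + z))" for \<rho>
  proof safe
    fix x assume "\<forall>z. v z < \<rho> \<longrightarrow> Q (\<alpha> + z)" "v (x - \<alpha>) < \<rho>"
    then show "Q x" by (metis add.commute diff_add_cancel)
  qed simp
  show ?thesis unfolding eventually_v_near0_le_1 conv_ball_iff shift by blast
qed

lemma fps_conv_at_bounded:
  assumes "fps_conv_at c z"
  obtains M where "\<And>k. v (c $ k * z ^ k) \<le> M"
  using tendsto_zero_imp_bounded[OF assms[unfolded fps_conv_at_def]] by (metis abs_v)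

lemma v_feval_minus_lowest_term_le:
  assumes below: "\<And>k. k < n \<Longrightarrow> c $ k = 0" and conv: "fps_conv_at c (z0 * w)"
    and M: "\<And>k. v (c $ k * z0 ^ k) \<le> M" and w: "v w \<le> 1"
  shows "v (feval v c (z0 * w) - c $ n * (z0 * w) ^ n) \<le> M * v w ^ Suc n"
proof -
  have M0: "0 \<le> M" using M[of 0] v_nonneg[of "c $ 0 * z0 ^ 0"] by linarith
  have "sum (\<lambda>k. c $ k * (z0 * w) ^ k) {..<Suc n} = c $ n * (z0 * w) ^ n"
    using below by (simp add: sum.neutral)
  moreover have "v (feval v c (z0 * w) - sum (\<lambda>k. c $ k * (z0 * w) ^ k) {..<Suc n}) \<le> M * v w ^ Suc n"
  proof (rule v_sums_tail_le[OF v_sums_feval[OF conv]])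
    fix k assume k: "Suc n \<le> k"
    have "v (c $ k * (z0 * w) ^ k) = v (c $ k * z0 ^ k) * v w ^ k"
      by (simp add: v_mult v_power power_mult_distrib)
    also have "\<dots> \<le> M * v w ^ k" using M[of k] v_nonneg by (simp add: mult_right_mono)
    also have "\<dots> \<le> M * v w ^ Suc n"
      using M0 w k by (intro mult_left_mono power_decreasing) (simp_all add: v_nonneg)
    finally show "v (c $ k * (z0 * w) ^ k) \<le> M * v w ^ Suc n" .
  qed
  ultimately show ?thesis by simp
qed

text \<open>Identity theorem: near \<open>0\<close> the lowest nonzero term of a nonzero series dominates the rest.\<close>

lemma fps_eq_0_if_feval_eq_0:
  assumes conv: "\<forall>\<^sub>F z in v_near0. fps_conv_at c z" and zero: "\<forall>\<^sub>F z in v_near0. feval v c z = 0"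
  shows "c = 0"
proof (rule ccontr)
  assume "c \<noteq> 0"
  define n where "n = subdegree c"
  have cn: "c $ n \<noteq> 0" and below: "\<And>k. k < n \<Longrightarrow> c $ k = 0"
    using \<open>c \<noteq> 0\<close> unfolding n_def by auto
  obtain \<rho> where \<rho>: "\<rho> > 0" "\<And>z. v z < \<rho> \<Longrightarrow> fps_conv_at c z \<and> feval v c z = 0"
    using eventually_conj[OF conv zero] unfolding eventually_v_near0 by blast
  obtain z0 where z0: "0 < v z0" "v z0 < \<rho>" using v_arbitrarily_small \<rho>(1) by blast
  obtain M where M: "\<And>k. v (c $ k * z0 ^ k) \<le> M" using fps_conv_at_bounded \<rho>(2) z0(2) by blast
  define A where "A = v (c $ n * z0 ^ n)"
  have "z0 \<noteq> 0" using z0(1) by auto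
  then have A: "0 < A" "A \<le> M" using cn M[of n] unfolding A_def by (auto simp: v_pos)
  obtain w where w: "0 < v w" "v w < min 1 (A / M)" using v_arbitrarily_small[of "min 1 (A / M)"] A by auto
  have "v z0 * v w < v z0" using z0 w mult_strict_left_mono[of "v w" 1 "v z0"] by simp
  then have vz: "v (z0 * w) < \<rho>" unfolding v_mult using z0(2) by linarith
  have "v (feval v c (z0 * w) - c $ n * (z0 * w) ^ n) \<le> M * v w ^ Suc n"
    using w by (intro v_feval_minus_lowest_term_le below M) (simp_all add: \<rho>(2)[OF vz])
  also have "\<dots> < A * v w ^ n" using w A by (simp add: pos_less_divide_eq mult.commute)
  also have lowest: "A * v w ^ n = v (c $ n * (z0 * w) ^ n)"
    unfolding A_def by (simp add: v_mult v_power power_mult_distrib)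
  finally have "v (c $ n * (z0 * w) ^ n + (feval v c (z0 * w) - c $ n * (z0 * w) ^ n)) = v (c $ n * (z0 * w) ^ n)"
    by (rule v_add_eq_left)
  moreover have "v (c $ n * (z0 * w) ^ n) > 0" unfolding lowest[symmetric] using A(1) w(1) by simp
  ultimately show False using \<rho>(2)[OF vz] by simp
qed

lemma fps_eq_if_feval_eq:
  assumes "\<forall>\<^sub>F z in v_near0. fps_conv_at c z" "\<forall>\<^sub>F z in v_near0. fps_conv_at d z"
    and "\<forall>\<^sub>F z in v_near0. feval v c z = feval v d z"
  shows "c = d"
proof -
  have "c - d = 0"
  proof (rule fps_eq_0_if_feval_eq_0)
    show "\<forall>\<^sub>F z in v_near0. fps_conv_at (c - d) z"
      using assms(1,2) by eventually_elim (rule fps_conv_at_diff)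
    show "\<forall>\<^sub>F z in v_near0. feval v (c - d) z = 0"
      using assms by eventually_elim (simp add: feval_diff)
  qed
  then show ?thesis by simp
qed

lemma v_power_coeff_le:
  assumes "\<And>k. v (g $ k * z ^ k) \<le> W" "0 \<le> W"
  shows "v ((g ^ n) $ m * z ^ m) \<le> W ^ n"
proof (induction n arbitrary: m)
  case 0
  then show ?case by (cases m) simp_all
next
  case (Suc n)
  have "v ((g ^ Suc n) $ m * z ^ m)
      = v (\<Sum>k\<le>m. (g $ k * z ^ k) * ((g ^ n) $ (m - k) * z ^ (m - k)))"
    by (simp only: power_Suc fps_mult_nth_mult_power)
  also have "\<dots> \<le> W ^ Suc n"
  proof (rule v_sum_le)
    fix k
    show "v ((g $ k * z ^ k) * ((g ^ n) $ (m - k) * z ^ (m - k))) \<le> W ^ Suc n"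
      using mult_mono[OF assms(1)[of k] Suc.IH[of "m - k"] assms(2) v_nonneg] by (simp add: v_mult)
  qed (simp add: assms)
  finally show ?case .
qed

text \<open>Substituting \<open>g\<close> into \<open>c\<close> is an iterated series \<open>\<Sum>\<^sub>n c\<^sub>n \<Sum>\<^sub>m (g\<^sup>n)\<^sub>m z\<^sup>m\<close>; bounding the terms of \<open>g\<close> at \<open>z\<close>
  by \<open>v w\<close>, with \<open>c\<close> convergent at \<open>w\<close>, makes it a double null sequence, so the order of summation can be swapped.\<close>

lemma v_null_double_compose_terms:
  assumes g: "fps_conv_at g z" and c: "fps_conv_at c w" and gw: "\<And>k. v (g $ k * z ^ k) \<le> v w"
  shows "v_null_double (\<lambda>n m. c $ n * ((g ^ n) $ m * z ^ m))"
  unfolding v_null_double_def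
proof (intro allI impI)
  fix e :: real assume e: "e > 0"
  obtain N1 where N1: "\<forall>n\<ge>N1. v (c $ n * w ^ n) < e"
    using c e unfolding fps_conv_at_def tendsto_zero_iff_real abs_v by blast
  have "\<forall>n\<in>{..<N1}. \<forall>\<^sub>F m in sequentially. v (c $ n * ((g ^ n) $ m * z ^ m)) < e"
  proof
    fix n
    have "(\<lambda>m. v (c $ n) * v ((g ^ n) $ m * z ^ m)) \<longlonglongrightarrow> 0"
      using fps_conv_at_power[OF g] unfolding fps_conv_at_def by (rule tendsto_mult_right_zero)
    then show "\<forall>\<^sub>F m in sequentially. v (c $ n * ((g ^ n) $ m * z ^ m)) < e"
      unfolding v_mult using e by (rule order_tendstoD(2))
  qed
  then have "\<forall>\<^sub>F m in sequentially. \<forall>n\<in>{..<N1}. v (c $ n * ((g ^ n) $ m * z ^ m)) < e"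
    by (rule eventually_ball_finite[OF finite_lessThan])
  then obtain N2 where N2: "\<And>m n. m \<ge> N2 \<Longrightarrow> n < N1 \<Longrightarrow> v (c $ n * ((g ^ n) $ m * z ^ m)) < e"
    unfolding eventually_sequentially by auto
  have "v (c $ n * ((g ^ n) $ m * z ^ m)) < e" if "max N1 N2 \<le> n \<or> max N1 N2 \<le> m" for n m
  proof (cases "n \<ge> N1")
    case True
    have "v (c $ n * ((g ^ n) $ m * z ^ m)) = v (c $ n) * v ((g ^ n) $ m * z ^ m)" by (rule v_mult)
    also have "\<dots> \<le> v (c $ n) * v w ^ n"
      by (rule mult_left_mono[OF v_power_coeff_le[OF gw v_nonneg] v_nonneg])
    also have "\<dots> < e" using N1 True by (simp add: v_mult v_power)
    finally show ?thesis .
  next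
    case False
    then show ?thesis using N2[of m n] that by linarith
  qed
  then show "\<exists>N. \<forall>n m. N \<le> n \<or> N \<le> m \<longrightarrow> v (c $ n * ((g ^ n) $ m * z ^ m)) < e" by blast
qed

lemma feval_compose_at:
  assumes g0: "g $ 0 = 0" and g: "fps_conv_at g z" and c: "fps_conv_at c w"
    and gw: "\<And>k. v (g $ k * z ^ k) \<le> v w"
  shows "fps_conv_at (c oo g) z \<and> feval v (c oo g) z = feval v c (feval v g z)"
proof -
  have rows: "v_sums (\<lambda>m. c $ n * ((g ^ n) $ m * z ^ m)) (c $ n * feval v g z ^ n)" for n
    using v_sums_cmult[OF v_sums_feval[OF fps_conv_at_power[OF g, of n]], of "c $ n"]
    unfolding feval_power[OF g] .
  have cols: "v_sums (\<lambda>n. c $ n * ((g ^ n) $ m * z ^ m)) ((c oo g) $ m * z ^ m)" for m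
  proof -
    have "v_sums (\<lambda>n. c $ n * ((g ^ n) $ m * z ^ m)) (\<Sum>n<Suc m. c $ n * ((g ^ n) $ m * z ^ m))"
      by (rule v_sums_finite) (simp add: startsby_zero_power_prefix[OF g0])
    then show ?thesis
      unfolding fps_compose_nth lessThan_Suc_atMost atLeast0AtMost sum_distrib_right
      by (simp add: mult.assoc)
  qed
  obtain Y where Y: "v_sums (\<lambda>n. c $ n * feval v g z ^ n) Y" "v_sums (\<lambda>m. (c oo g) $ m * z ^ m) Y"
    using v_sums_swap[OF v_null_double_compose_terms[OF g c gw] rows cols] by blast
  show ?thesis
    using feval_eqI[OF Y(1)] feval_eqI[OF Y(2)] v_sums_terms_tendsto_zero[OF Y(2)]
    unfolding fps_conv_at_def by simp
qed

definition conv_germ :: "'k fps \<Rightarrow> bool" where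
  "conv_germ c \<longleftrightarrow> (\<forall>\<^sub>F z in v_near0. fps_conv_at c z)"

lemma eventually_v_coeff_le:
  assumes g0: "g $ 0 = 0" and g: "conv_germ g" and B: "B > 0"
  shows "\<forall>\<^sub>F z in v_near0. \<forall>k. v (g $ k * z ^ k) \<le> B"
proof -
  obtain z0 where z0: "0 < v z0" "fps_conv_at g z0"
    using eventually_v_near0_nonzero_witness g unfolding conv_germ_def by blast
  obtain M where M: "\<And>k. v (g $ k * z0 ^ k) \<le> M" using fps_conv_at_bounded[OF z0(2)] by blast
  have M0: "0 \<le> M" using M[of 0] v_nonneg[of "g $ 0 * z0 ^ 0"] by linarith
  have "v (g $ k * z ^ k) \<le> B" if z: "v z < min (v z0) (B * v z0 / (M + 1))" for z k
  proof (cases "k = 0")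
    case False
    define q where "q = v z / v z0"
    have q: "0 \<le> q" "q \<le> 1" "q * (M + 1) < B"
      using z z0 M0 v_nonneg[of z] unfolding q_def by (simp_all add: field_simps)
    have "v (g $ k * z ^ k) = v (g $ k * z0 ^ k) * q ^ k"
      unfolding q_def using z0 by (simp add: v_mult v_power power_divide)
    also have "\<dots> \<le> M * q" 
      using mult_mono[OF M[of k] power_decreasing[of 1 k q]] False q M0 by (simp add: v_nonneg)
    also have "\<dots> \<le> B" using q M0 by (simp add: algebra_simps)
    finally show ?thesis .
  qed (use g0 B in simp)
  moreover have "0 < min (v z0) (B * v z0 / (M + 1))" using z0 B M0 by simp
  ultimately show ?thesis unfolding eventually_v_near0 by blast
qed

lemma feval_compose:
  assumes g0: "g $ 0 = 0" and g: "conv_germ g" and c: "conv_germ c"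
  shows "\<forall>\<^sub>F z in v_near0. fps_conv_at (c oo g) z \<and> feval v (c oo g) z = feval v c (feval v g z)"
proof -
  obtain w where w: "0 < v w" "fps_conv_at c w"
    using eventually_v_near0_nonzero_witness c unfolding conv_germ_def by blast
  show ?thesis
    using g eventually_v_coeff_le[OF g0 g w(1)] unfolding conv_germ_def
    by eventually_elim (use feval_compose_at[OF g0 _ w(2)] in blast)
qed

lemma filterlim_feval_v_near0:
  assumes g0: "g $ 0 = 0" and g: "conv_germ g"
  shows "filterlim (feval v g) v_near0 v_near0"
  unfolding filterlim_iff
proof (intro allI impI)
  fix P assume "eventually P v_near0"
  then obtain \<rho> where \<rho>: "\<rho> > 0" "\<And>z. v z < \<rho> \<Longrightarrow> P z" unfolding eventually_v_near0 by blast
  have "\<forall>\<^sub>F z in v_near0. fps_conv_at g z \<and> (\<forall>k. v (g $ k * z ^ k) \<le> \<rho> / 2)"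
    using g eventually_v_coeff_le[OF g0 g, of "\<rho> / 2"] \<rho>(1) unfolding conv_germ_def
    by (intro eventually_conj) simp_all
  then show "\<forall>\<^sub>F z in v_near0. P (feval v g z)"
  proof eventually_elim
    case (elim z)
    then have "v (feval v g z) \<le> \<rho> / 2" using v_sums_le[OF v_sums_feval] by blast
    then show ?case using \<rho> by simp
  qed
qed

lemma eventually_v_feval_less_1:
  assumes "g $ 0 = 0" "conv_germ g"
  shows "\<forall>\<^sub>F z in v_near0. v (feval v g z) < 1"
  using filterlim_iff[THEN iffD1, OF filterlim_feval_v_near0[OF assms]]
    eventually_v_less_v_near0[OF zero_less_one] by blast

lemma conv_germ_add:
  assumes "conv_germ c" "conv_germ d"
  shows "conv_germ (c + d)"
  using assms unfolding conv_germ_def by eventually_elim (rule fps_conv_at_add)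

lemma conv_germ_mult:
  assumes "conv_germ c" "conv_germ d"
  shows "conv_germ (c * d)"
  using assms unfolding conv_germ_def by eventually_elim (rule fps_conv_at_mult)

lemma conv_germ_minus: "conv_germ c \<Longrightarrow> conv_germ (- c)"
  unfolding conv_germ_def by (erule eventually_mono) (rule fps_conv_at_minus)

lemma conv_germ_diff: "conv_germ c \<Longrightarrow> conv_germ d \<Longrightarrow> conv_germ (c - d)"
  using conv_germ_add[of c "- d"] conv_germ_minus[of d] by simp

lemma conv_germ_const: "conv_germ (fps_const k)"
  unfolding conv_germ_def by (rule always_eventually) (simp add: fps_conv_at_const)

lemma conv_germ_X: "conv_germ fps_X"
  unfolding conv_germ_def by (rule always_eventually) (simp add: fps_conv_at_X)

lemma conv_germ_0: "conv_germ 0" and conv_germ_1: "conv_germ 1"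
  using conv_germ_const[of 0] conv_germ_const[of 1] by simp_all

lemma conv_germ_power: "conv_germ c \<Longrightarrow> conv_germ (c ^ n)"
  by (induction n) (simp_all add: conv_germ_1 conv_germ_mult)

lemma conv_germ_sum: "(\<And>i. i \<in> I \<Longrightarrow> conv_germ (f i)) \<Longrightarrow> conv_germ (\<Sum>i\<in>I. f i)"
  by (induction I rule: infinite_finite_induct) (simp_all add: conv_germ_0 conv_germ_add)

lemma conv_germ_compose: "g $ 0 = 0 \<Longrightarrow> conv_germ g \<Longrightarrow> conv_germ c \<Longrightarrow> conv_germ (c oo g)"
  using feval_compose unfolding conv_germ_def by (blast intro: eventually_mono)

lemma conv_germ_coeff_prod:
  assumes "\<And>x n. x \<in> S \<Longrightarrow> conv_germ (coeff (F x) n)"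
  shows "conv_germ (coeff (\<Prod>x\<in>S. F x) n)"
  using assms
proof (induction S arbitrary: n rule: infinite_finite_induct)
  case (insert x S)
  then show ?case by (simp add: coeff_mult conv_germ_sum conv_germ_mult)
qed (simp_all add: coeff_1 conv_germ_0 conv_germ_1)

text \<open>\<open>1 / c = (1 / c\<^sub>0) \<cdot> (1 / (1 - g))\<close> with \<open>g\<^sub>0 = 0\<close>, and \<open>1 / (1 - g)\<close> is the geometric series composed with \<open>g\<close>.\<close>

lemma conv_germ_inverse:
  assumes c0: "c $ 0 \<noteq> 0" and c: "conv_germ c"
  shows "conv_germ (inverse c)"
proof -
  define g where "g = 1 - fps_const (inverse (c $ 0)) * c"
  define K where "K = Abs_fps (\<lambda>n. 1) oo g"
  have g0: "g $ 0 = 0" unfolding g_def using c0 by simp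
  have "conv_germ (Abs_fps (\<lambda>n. 1))"
    unfolding conv_germ_def eventually_v_near0
  proof (intro exI[of _ 1] conjI allI impI)
    fix z assume "v z < 1"
    then have "(\<lambda>n. v z ^ n) \<longlonglongrightarrow> 0" using v_nonneg[of z] by (intro LIMSEQ_power_zero) simp
    then show "fps_conv_at (Abs_fps (\<lambda>n. 1)) z" unfolding fps_conv_at_def by (simp add: v_power)
  qed simp
  then have K: "conv_germ K"
    unfolding K_def g_def using g0[unfolded g_def] c
    by (intro conv_germ_compose conv_germ_diff conv_germ_1 conv_germ_mult conv_germ_const)
  have "K * (1 - g) = (Abs_fps (\<lambda>n. 1) * (1 - fps_X)) oo g"
    unfolding K_def fps_compose_mult_distrib[OF g0] fps_compose_sub_distrib
    by (simp add: fps_X_fps_compose_startby0[OF g0])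
  also have "Abs_fps (\<lambda>n. 1) * (1 - fps_X) = (1 :: 'k fps)"
    by (metis fps_inverse_gp' inverse_mult_eq_1' fps_nth_Abs_fps one_neq_zero)
  finally have "c * (fps_const (inverse (c $ 0)) * K) = 1"
    unfolding g_def using c0 by (simp add: algebra_simps fps_const_mult[symmetric])
  then have "inverse c = fps_const (inverse (c $ 0)) * K" by (rule fps_inverse_unique)
  then show ?thesis using K by (simp add: conv_germ_mult conv_germ_const)
qed

lemma eventually_system_iff:
  assumes "finite I" "finite J"
    and eval: "\<forall>\<^sub>F z in v_near0. (\<forall>l\<in>I. fps_conv_at (C l) z) \<longrightarrow>
      (\<forall>m\<in>J. fps_conv_at (E m) z \<and> feval v (E m) z = e m z)"
  shows "(\<forall>\<^sub>F z in v_near0. (\<forall>l\<in>I. fps_conv_at (C l) z) \<and> (\<forall>m\<in>J. e m z = 0))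
    \<longleftrightarrow> (\<forall>l\<in>I. conv_germ (C l)) \<and> (\<forall>m\<in>J. E m = 0)"
proof safe
  assume sys: "\<forall>\<^sub>F z in v_near0. (\<forall>l\<in>I. fps_conv_at (C l) z) \<and> (\<forall>m\<in>J. e m z = 0)"
  show "conv_germ (C l)" if "l \<in> I" for l
    using sys unfolding conv_germ_def by (rule eventually_mono) (use that in blast)
  show "E m = 0" if "m \<in> J" for m
  proof (rule fps_eq_0_if_feval_eq_0)
    show "\<forall>\<^sub>F z in v_near0. fps_conv_at (E m) z"
      using sys eval by eventually_elim (use that in blast)
    show "\<forall>\<^sub>F z in v_near0. feval v (E m) z = 0"
      using sys eval by eventually_elim (use that in simp)
  qed
next
  assume conv: "\<forall>l\<in>I. conv_germ (C l)" and zero: "\<forall>m\<in>J. E m = 0"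
  have "\<forall>\<^sub>F z in v_near0. \<forall>l\<in>I. fps_conv_at (C l) z"
    using conv unfolding conv_germ_def by (rule eventually_ball_finite[OF assms(1)])
  then show "\<forall>\<^sub>F z in v_near0. (\<forall>l\<in>I. fps_conv_at (C l) z) \<and> (\<forall>m\<in>J. e m z = 0)"
    using eval by eventually_elim (use zero in \<open>auto simp: feval_0\<close>)
qed

definition v_suminf :: "(nat \<Rightarrow> 'k) \<Rightarrow> 'k" where
  "v_suminf a = (THE y. v_sums a y)"

lemma v_suminf_eq: "v_sums a y \<Longrightarrow> v_suminf a = y"
  unfolding v_suminf_def using v_sums_unique by blast

text \<open>Taylor expansion of \<open>c\<close> around \<open>a\<close>: \<open>feval v (recenter c a) z = feval v c (a + z)\<close>.\<close>

definition recenter :: "'k fps \<Rightarrow> 'k \<Rightarrow> 'k fps" where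
  "recenter c a = Abs_fps (\<lambda>n. v_suminf (\<lambda>k. c $ k * of_nat (k choose n) * a ^ (k - n)))"

lemma v_sums_recenter_nth:
  assumes "fps_conv_at c a"
  shows "v_sums (\<lambda>k. c $ k * of_nat (k choose n) * a ^ (k - n)) (recenter c a $ n)"
proof -
  have "(\<lambda>k. v (c $ k * of_nat (k choose n) * a ^ (k - n))) \<longlonglongrightarrow> 0"
  proof (cases "a = 0")
    case True
    have "(\<lambda>k. 0 :: real) \<longlonglongrightarrow> 0" by simp
    then show ?thesis
    proof (rule tendsto_zero_dominated[where M = "Suc n"])
      fix k assume "Suc n \<le> k"
      then have "0 < k - n" by simp
      then show "\<bar>v (c $ k * of_nat (k choose n) * a ^ (k - n))\<bar> \<le> 0" by (simp add: True power_0_left)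
    qed
  next
    case False
    have "(\<lambda>k. inverse (v a ^ n) * v (c $ k * a ^ k)) \<longlonglongrightarrow> 0"
      using assms unfolding fps_conv_at_def by (rule tendsto_mult_right_zero)
    then show ?thesis
    proof (rule tendsto_zero_dominated[where M = n])
      fix k assume k: "n \<le> k"
      have "v (c $ k * of_nat (k choose n) * a ^ (k - n)) \<le> v (c $ k * a ^ (k - n))"
        using v_of_nat_mult_le[of "k choose n" "c $ k * a ^ (k - n)"] by (simp add: mult_ac)
      also have "\<dots> = inverse (v a ^ n) * v (c $ k * a ^ k)"
        using v_pos[OF False] k by (simp add: v_mult v_power field_simps flip: power_add)
      finally show "\<bar>v (c $ k * of_nat (k choose n) * a ^ (k - n))\<bar> \<le> inverse (v a ^ n) * v (c $ k * a ^ k)"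
        by simp
    qed
  qed
  then obtain y where "v_sums (\<lambda>k. c $ k * of_nat (k choose n) * a ^ (k - n)) y"
    by (rule v_sums_exists)
  then show ?thesis unfolding recenter_def by (simp add: v_suminf_eq)
qed

lemma v_null_double_binomial_terms:
  assumes a: "fps_conv_at c a" and z: "fps_conv_at c z"
  shows "v_null_double (\<lambda>k n. c $ k * of_nat (k choose n) * a ^ (k - n) * z ^ n)"
  unfolding v_null_double_def
proof (intro allI impI)
  fix e :: real assume e: "e > 0"
  define w where "w = (if v a \<le> v z then z else a)"
  have w: "fps_conv_at c w" "v a \<le> v w" "v z \<le> v w" using a z unfolding w_def by auto
  obtain N where N: "\<forall>k\<ge>N. v (c $ k * w ^ k) < e"
    using w(1) e unfolding fps_conv_at_def tendsto_zero_iff_real abs_v by blast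
  have "v (c $ k * of_nat (k choose n) * a ^ (k - n) * z ^ n) < e" if "N \<le> k \<or> N \<le> n" for k n
  proof (cases "n \<le> k")
    case True
    have "v (c $ k * of_nat (k choose n) * a ^ (k - n) * z ^ n) \<le> v (c $ k) * (v a ^ (k - n) * v z ^ n)"
      using v_of_nat_mult_le[of "k choose n" "c $ k * a ^ (k - n) * z ^ n"]
      by (simp add: mult_ac v_mult v_power)
    also have "\<dots> \<le> v (c $ k) * (v w ^ (k - n) * v w ^ n)"
      using w by (intro mult_left_mono mult_mono power_mono) (simp_all add: v_nonneg)
    also have "\<dots> = v (c $ k * w ^ k)" using True by (simp add: v_mult v_power flip: power_add)
    also have "\<dots> < e" using N that True by (meson order.trans)
    finally show ?thesis .
  qed (simp add: binomial_eq_0 e)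
  then show "\<exists>N. \<forall>k n. N \<le> k \<or> N \<le> n \<longrightarrow> v (c $ k * of_nat (k choose n) * a ^ (k - n) * z ^ n) < e"
    by blast
qed

lemma feval_recenter:
  assumes a: "fps_conv_at c a" and z: "fps_conv_at c z"
  shows "fps_conv_at (recenter c a) z" "feval v (recenter c a) z = feval v c (a + z)"
proof -
  define b where "b k n = c $ k * of_nat (k choose n) * a ^ (k - n) * z ^ n" for k n
  have rows: "v_sums (b k) (c $ k * (a + z) ^ k)" for k
  proof -
    have "v_sums (b k) (\<Sum>n<Suc k. b k n)" by (rule v_sums_finite) (simp add: b_def)
    moreover have "(\<Sum>n<Suc k. b k n) = c $ k * (a + z) ^ k"
      unfolding b_def lessThan_Suc_atMost binomial_ring[of z a k, unfolded add.commute[of z a]] sum_distrib_left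
      by (rule sum.cong) (simp_all add: algebra_simps)
    ultimately show ?thesis by simp
  qed
  have cols: "v_sums (\<lambda>k. b k n) (recenter c a $ n * z ^ n)" for n
    using v_sums_cmult[OF v_sums_recenter_nth[OF a, of n], of "z ^ n"] unfolding b_def
    by (simp add: mult.commute)
  obtain Y where Y: "v_sums (\<lambda>k. c $ k * (a + z) ^ k) Y" "v_sums (\<lambda>n. recenter c a $ n * z ^ n) Y"
    using v_sums_swap[OF v_null_double_binomial_terms[OF a z, folded b_def] rows cols] by blast
  show "fps_conv_at (recenter c a) z"
    using v_sums_terms_tendsto_zero[OF Y(2)] unfolding fps_conv_at_def .
  show "feval v (recenter c a) z = feval v c (a + z)"
    using feval_eqI[OF Y(1)] feval_eqI[OF Y(2)] by simp
qed

lemma recenter_nth_0: "fps_conv_at c a \<Longrightarrow> recenter c a $ 0 = feval v c a"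
  using feval_recenter[of c a 0] by (simp add: fps_conv_at_zero feval_at_zero)

lemma fps_deriv_recenter:
  assumes a: "fps_conv_at c a"
  shows "fps_deriv (recenter c a) = recenter (fps_deriv c) a"
proof (rule fps_ext)
  fix n
  have "v_sums (\<lambda>k. of_nat (Suc n) * (c $ k * of_nat (k choose Suc n) * a ^ (k - Suc n)))
      (of_nat (Suc n) * recenter c a $ Suc n)"
    by (rule v_sums_cmult[OF v_sums_recenter_nth[OF a]])
  then have shifted: "v_sums (\<lambda>k. of_nat (Suc n) * (c $ (k + 1) * of_nat ((k + 1) choose Suc n) * a ^ (k + 1 - Suc n)))
      (of_nat (Suc n) * recenter c a $ Suc n)"
    using v_sums_shift[of _ _ 1] by fastforce
  have eq: "of_nat (Suc n) * (c $ (k + 1) * of_nat ((k + 1) choose Suc n) * a ^ (k + 1 - Suc n))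
      = fps_deriv c $ k * of_nat (k choose n) * a ^ (k - n)" for k
  proof -
    have H: "(of_nat (Suc n) :: 'k) * of_nat (Suc k choose Suc n) = of_nat (Suc k) * of_nat (k choose n)"
      by (metis Suc_times_binomial of_nat_mult)
    have "of_nat (Suc n) * (c $ (k + 1) * of_nat ((k + 1) choose Suc n) * a ^ (k + 1 - Suc n))
      = ((of_nat (Suc n) :: 'k) * of_nat (Suc k choose Suc n)) * (c $ Suc k * a ^ (k - n))"
      by (simp del: of_nat_Suc add: mult_ac)
    also have "\<dots> = fps_deriv c $ k * of_nat (k choose n) * a ^ (k - n)"
      unfolding H by (simp del: of_nat_Suc add: fps_deriv_nth mult_ac)
    finally show ?thesis .
  qed
  have "of_nat (Suc n) * recenter c a $ Suc n = recenter (fps_deriv c) a $ n"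
    using shifted[unfolded eq] v_sums_recenter_nth[OF fps_conv_at_deriv[OF a]] by (rule v_sums_unique)
  then show "fps_deriv (recenter c a) $ n = recenter (fps_deriv c) a $ n" by (simp add: mult.commute)
qed

section \<open>Analytic functions on the unit disc\<close>

lemma disc_iff: "x \<in> disc opn v \<longleftrightarrow> (if opn then v x < 1 else v x \<le> 1)"
  unfolding disc_def by simp

lemma disc_add: "a \<in> disc opn v \<Longrightarrow> v z < 1 \<Longrightarrow> a + z \<in> disc opn v"
  unfolding disc_iff using v_ultra[of a z] by (auto split: if_splits)

lemma inO_iff_decays:
  "inO opn v c \<longleftrightarrow> (\<forall>\<rho>. (if opn then 0 < \<rho> \<and> \<rho> < 1 else \<rho> = 1) \<longrightarrow> fps_decays c \<rho>)"
  unfolding inO_def fps_decays_def by auto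

lemma fps_conv_at_inO:
  assumes c: "inO opn v c" and x: "x \<in> disc opn v"
  shows "fps_conv_at c x"
proof -
  define \<rho> where "\<rho> = (if opn then (v x + 1) / 2 else 1)"
  have "fps_decays c \<rho>" "v x \<le> \<rho>"
    using c[unfolded inO_iff_decays, rule_format, of \<rho>] x v_nonneg[of x]
    unfolding disc_iff \<rho>_def by (auto split: if_splits)
  then show ?thesis unfolding fps_conv_at_iff_decays using fps_decays_mono v_nonneg by blast
qed

lemma inO_add: "inO opn v c \<Longrightarrow> inO opn v d \<Longrightarrow> inO opn v (c + d)"
  unfolding inO_iff_decays by (metis fps_decays_add less_eq_real_def zero_less_one)

lemma inO_mult: "inO opn v c \<Longrightarrow> inO opn v d \<Longrightarrow> inO opn v (c * d)"
  unfolding inO_iff_decays by (metis fps_decays_mult less_eq_real_def zero_less_one)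

lemma inO_deriv: "inO opn v c \<Longrightarrow> inO opn v (fps_deriv c)"
  unfolding inO_iff_decays by (metis fps_decays_deriv zero_less_one)

lemma inO_finite: "(\<And>n. n \<ge> N \<Longrightarrow> c $ n = 0) \<Longrightarrow> inO opn v c"
  unfolding inO_iff_decays by (blast intro: fps_decays_finite)

lemma inO_const: "inO opn v (fps_const k)"
  by (rule inO_finite[of 1]) simp

lemma inO_X: "inO opn v fps_X"
  by (rule inO_finite[of 2]) (simp add: fps_X_def)

lemma inO_power: "inO opn v c \<Longrightarrow> inO opn v (c ^ n)"
  by (induction n) (simp_all add: inO_mult inO_const[of opn 1, simplified])

lemma feval_recenter_inO:
  assumes "inO opn v c" "a \<in> disc opn v" "v z < 1"
  shows "fps_conv_at (recenter c a) z" "feval v (recenter c a) z = feval v c (a + z)"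
  using feval_recenter[OF fps_conv_at_inO[OF assms(1,2)] fps_conv_at_inO[OF assms(1)]] assms(3)
  by (simp_all add: disc_iff)

lemma conv_germ_recenter_inO: "inO opn v c \<Longrightarrow> a \<in> disc opn v \<Longrightarrow> conv_germ (recenter c a)"
  unfolding conv_germ_def using eventually_v_less_v_near0[OF zero_less_one]
  by (auto elim: eventually_mono intro: feval_recenter_inO)

lemma recenter_inO_unique:
  assumes c: "inO opn v c" and a: "a \<in> disc opn v" and d: "conv_germ d"
    and eq: "\<forall>\<^sub>F z in v_near0. feval v d z = feval v c (a + z)"
  shows "recenter c a = d"
proof (rule fps_eq_if_feval_eq)
  show "\<forall>\<^sub>F z in v_near0. fps_conv_at (recenter c a) z"
    using conv_germ_recenter_inO[OF c a] unfolding conv_germ_def .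
  show "\<forall>\<^sub>F z in v_near0. fps_conv_at d z" using d unfolding conv_germ_def .
  show "\<forall>\<^sub>F z in v_near0. feval v (recenter c a) z = feval v d z"
    using eq eventually_v_less_v_near0[OF zero_less_one] by eventually_elim (simp add: feval_recenter_inO[OF c a])
qed

lemma recenter_mult:
  assumes c: "inO opn v c" and d: "inO opn v d" and a: "a \<in> disc opn v"
  shows "recenter (c * d) a = recenter c a * recenter d a"
proof (rule recenter_inO_unique[OF inO_mult[OF c d] a])
  show "conv_germ (recenter c a * recenter d a)"
    by (rule conv_germ_mult[OF conv_germ_recenter_inO[OF c a] conv_germ_recenter_inO[OF d a]])
  show "\<forall>\<^sub>F z in v_near0. feval v (recenter c a * recenter d a) z = feval v (c * d) (a + z)"
    using eventually_v_less_v_near0[OF zero_less_one]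
  proof eventually_elim
    case (elim z)
    have "a + z \<in> disc opn v" using disc_add[OF a elim] .
    then show ?case
      using elim by (simp add: feval_mult feval_recenter_inO[OF c a] feval_recenter_inO[OF d a]
          fps_conv_at_inO[OF c] fps_conv_at_inO[OF d])
  qed
qed

lemma recenter_add:
  assumes c: "inO opn v c" and d: "inO opn v d" and a: "a \<in> disc opn v"
  shows "recenter (c + d) a = recenter c a + recenter d a"
proof (rule recenter_inO_unique[OF inO_add[OF c d] a])
  show "conv_germ (recenter c a + recenter d a)"
    by (rule conv_germ_add[OF conv_germ_recenter_inO[OF c a] conv_germ_recenter_inO[OF d a]])
  show "\<forall>\<^sub>F z in v_near0. feval v (recenter c a + recenter d a) z = feval v (c + d) (a + z)"
    using eventually_v_less_v_near0[OF zero_less_one]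
  proof eventually_elim
    case (elim z)
    have "a + z \<in> disc opn v" using disc_add[OF a elim] .
    then show ?case
      using elim by (simp add: feval_add feval_recenter_inO[OF c a] feval_recenter_inO[OF d a]
          fps_conv_at_inO[OF c] fps_conv_at_inO[OF d])
  qed
qed

lemma recenter_const: "a \<in> disc opn v \<Longrightarrow> recenter (fps_const k) a = fps_const k"
  by (rule recenter_inO_unique[OF inO_const]) (simp_all add: conv_germ_const feval_const)

lemma recenter_X: "a \<in> disc opn v \<Longrightarrow> recenter fps_X a = fps_X + fps_const a"
  by (rule recenter_inO_unique[OF inO_X])
    (simp_all add: conv_germ_add conv_germ_const conv_germ_X feval_add fps_conv_at_X fps_conv_at_const
      feval_X feval_const add.commute)

lemma recenter_power:
  assumes "inO opn v c" "a \<in> disc opn v"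
  shows "recenter (c ^ n) a = recenter c a ^ n"
proof (induction n)
  case (Suc n)
  then show ?case by (simp add: recenter_mult[OF assms(1) inO_power[OF assms(1)] assms(2)])
qed (simp add: recenter_const[OF assms(2), of 1, simplified])

end

section \<open>Polynomial algebra over power series\<close>

lemma sum_mult_delta_right:
  "q < (N::nat) \<Longrightarrow> (\<Sum>j<N. g j * (if q = j then 1 else 0)) = (g q :: 'b::comm_semiring_1)"
  by (simp add: if_distrib[of "(*) _"] cong: if_cong)

lemma sum_mult_delta_left:
  "q < (N::nat) \<Longrightarrow> (\<Sum>j<N. (if q = j then 1 else 0) * g j) = (g q :: 'b::comm_semiring_1)"
  using sum_mult_delta_right[of q N g] by (simp add: mult.commute)

text \<open>\<open>x - y\<close> divides the difference of the two equations, and the cofactor has the derivative at \<open>x\<^sub>0\<close>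
  as constant term, so it is a unit.\<close>

lemma fps_monic_root_unique:
  fixes q :: "nat \<Rightarrow> 'k::field fps" and x y :: "'k fps"
  assumes x0: "x $ 0 = y $ 0"
    and rx: "(\<Sum>j<d. q j * x ^ j) + x ^ d = 0" and ry: "(\<Sum>j<d. q j * y ^ j) + y ^ d = 0"
    and simple: "(\<Sum>j<d. q j $ 0 * of_nat j * (x $ 0) ^ (j - 1)) + of_nat d * (x $ 0) ^ (d - 1) \<noteq> 0"
  shows "x = y"
proof -
  define D where "D j = (\<Sum>i<j. y ^ (j - Suc i) * x ^ i)" for j
  define S where "S = (\<Sum>j<d. q j * D j) + D d"
  have "0 = ((\<Sum>j<d. q j * x ^ j) + x ^ d) - ((\<Sum>j<d. q j * y ^ j) + y ^ d)" using rx ry by simp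
  also have "\<dots> = (\<Sum>j<d. q j * (x ^ j - y ^ j)) + (x ^ d - y ^ d)"
    by (simp add: sum_subtractf right_diff_distrib)
  also have "\<dots> = (x - y) * S" unfolding S_def D_def power_diff_sumr2
    by (simp add: distrib_left sum_distrib_left mult_ac)
  finally have eq: "(x - y) * S = 0" by simp
  have D0: "D j $ 0 = of_nat j * (x $ 0) ^ (j - 1)" for j
  proof -
    have "D j $ 0 = (\<Sum>i<j. (x $ 0) ^ (j - Suc i) * (x $ 0) ^ i)"
      unfolding D_def by (simp add: fps_sum_nth fps_mult_nth_0 fps_power_zeroth x0)
    also have "\<dots> = (\<Sum>i<j. (x $ 0) ^ (j - 1))"
      by (rule sum.cong) (auto simp: power_add[symmetric])
    finally show ?thesis by simp
  qed
  have "S $ 0 \<noteq> 0"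
    using simple unfolding S_def by (simp add: fps_sum_nth fps_mult_nth_0 D0 mult.assoc)
  then show ?thesis using eq by auto
qed

text \<open>The \<open>d\<close> distinct roots exhaust the polynomial \<open>p\<close>, so \<open>p / (X - \<alpha>\<^sub>i)\<close>, whose value at \<open>\<alpha>\<^sub>i\<close> is
  \<open>p'(\<alpha>\<^sub>i)\<close>, cannot vanish at \<open>\<alpha>\<^sub>i\<close> as well.\<close>

lemma monic_deriv_nonzero_at_distinct_roots:
  fixes c :: "nat \<Rightarrow> 'k::field" and \<alpha> :: "nat \<Rightarrow> 'k"
  assumes inj: "inj_on \<alpha> {..<d}"
    and roots: "\<And>k. k < d \<Longrightarrow> (\<Sum>j<d. c j * \<alpha> k ^ j) + \<alpha> k ^ d = 0"
    and i: "i < d"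
  shows "(\<Sum>j<d. c j * of_nat j * \<alpha> i ^ (j - 1)) + of_nat d * \<alpha> i ^ (d - 1) \<noteq> 0"
proof -
  define p where "p = (\<Sum>j<d. monom (c j) j) + monom 1 d"
  have poly_p: "poly p x = (\<Sum>j<d. c j * x ^ j) + x ^ d" for x
    unfolding p_def by (simp add: poly_sum poly_monom)
  have lead: "coeff p d = 1" unfolding p_def by (simp add: coeff_sum coeff_monom)
  moreover have "degree p \<le> d" unfolding p_def
    by (intro degree_add_le degree_sum_le) (auto intro: order.trans[OF degree_monom_le])
  ultimately have p0: "p \<noteq> 0" and deg_p: "degree p = d" using le_degree[of p d] by auto
  obtain R where R: "p = [:- \<alpha> i, 1:] * R"
    using roots[OF i] unfolding poly_p[symmetric] poly_eq_0_iff_dvd by (auto elim: dvdE)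
  have R0: "R \<noteq> 0" using p0 R by auto
  have "degree R = d - 1" using deg_p R R0 degree_mult_eq[of "[:- \<alpha> i, 1:]" R] by simp
  have "poly R (\<alpha> i) \<noteq> 0"
  proof
    assume "poly R (\<alpha> i) = 0"
    moreover have "poly R (\<alpha> k) = 0" if "k < d" "k \<noteq> i" for k
      using roots[OF that(1)] inj that i R unfolding poly_p[symmetric] inj_on_def by auto
    ultimately have "\<alpha> ` {..<d} \<subseteq> {x. poly R x = 0}" by auto
    then have "card (\<alpha> ` {..<d}) \<le> degree R"
      using card_mono[OF poly_roots_finite[OF R0]] card_poly_roots_bound[OF R0] le_trans by blast
    then show False using card_image[OF inj] \<open>degree R = d - 1\<close> i by simp
  qed
  moreover have "poly (pderiv p) (\<alpha> i) = poly R (\<alpha> i)"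
    unfolding R pderiv_mult by (simp add: pderiv_pCons)
  moreover have "pderiv p = (\<Sum>j<d. pderiv (monom (c j) j)) + pderiv (monom 1 d)"
    unfolding p_def pderiv_add using higher_pderiv_sum[of 1 "\<lambda>j. monom (c j) j" "{..<d}"] by simp
  ultimately show ?thesis by (simp add: poly_sum pderiv_monom poly_monom mult_ac)
qed

lemma poly_eq_sum_lessThan:
  fixes p :: "'a::comm_semiring_1 poly"
  assumes "degree p < N"
  shows "poly p x = (\<Sum>q<N. coeff p q * x ^ q)"
proof -
  have "(\<Sum>q<N. coeff p q * x ^ q) = (\<Sum>q\<le>degree p. coeff p q * x ^ q)"
    using assms by (intro sum.mono_neutral_cong_right) (auto simp: coeff_eq_0)
  then show ?thesis by (subst poly_altdef) simp
qed

definition lagrange_basis :: "nat \<Rightarrow> (nat \<Rightarrow> 'a::field fps) \<Rightarrow> nat \<Rightarrow> 'a fps poly" where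
  "lagrange_basis d u i = (\<Prod>k\<in>{..<d} - {i}. [: - u k * inverse (u i - u k), inverse (u i - u k) :])"

definition vandermonde_inv :: "nat \<Rightarrow> (nat \<Rightarrow> 'a::field fps) \<Rightarrow> nat \<Rightarrow> nat \<Rightarrow> 'a fps" where
  "vandermonde_inv d u q i = coeff (lagrange_basis d u i) q"

locale fps_nodes =
  fixes d :: nat and u :: "nat \<Rightarrow> 'a::field fps"
  assumes distinct_nodes: "p < d \<Longrightarrow> k < d \<Longrightarrow> p \<noteq> k \<Longrightarrow> (u p - u k) $ 0 \<noteq> 0"
begin

lemma poly_lagrange_basis:
  assumes p: "p < d" and i: "i < d"
  shows "poly (lagrange_basis d u i) (u p) = (if p = i then 1 else 0)"
proof -
  have "poly (lagrange_basis d u i) (u p) = (\<Prod>k\<in>{..<d} - {i}. (u p - u k) * inverse (u i - u k))"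
    unfolding lagrange_basis_def poly_prod by (simp add: algebra_simps)
  also have "\<dots> = (if p = i then 1 else 0)"
  proof (cases "p = i")
    case True
    have "(u i - u k) * inverse (u i - u k) = 1" if "k \<in> {..<d} - {i}" for k
      using distinct_nodes[of i k] that i by (intro inverse_mult_eq_1') auto
    then show ?thesis using True by simp
  next
    case False
    have "(\<Prod>k\<in>{..<d} - {i}. (u p - u k) * inverse (u i - u k)) = 0"
      using p False by (intro prod_zero) (auto intro!: bexI[of _ p])
    then show ?thesis using False by simp
  qed
  finally show ?thesis .
qed

lemma degree_lagrange_basis: "i < d \<Longrightarrow> degree (lagrange_basis d u i) < d"
proof -
  assume i: "i < d"
  have "degree (lagrange_basis d u i) \<le> (\<Sum>k\<in>{..<d} - {i}. degree [: - u k * inverse (u i - u k), inverse (u i - u k) :])"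
    unfolding lagrange_basis_def by (rule degree_prod_sum_le[unfolded o_def]) simp
  also have "\<dots> \<le> (\<Sum>k\<in>{..<d} - {i}. 1)" by (intro sum_mono) simp
  finally show ?thesis using i by simp
qed

lemma vandermonde_inv_right:
  assumes "p < d" "i < d"
  shows "(\<Sum>q<d. u p ^ q * vandermonde_inv d u q i) = (if p = i then 1 else 0)"
proof -
  have "poly (lagrange_basis d u i) (u p) = (\<Sum>q<d. coeff (lagrange_basis d u i) q * u p ^ q)"
    by (rule poly_eq_sum_lessThan[OF degree_lagrange_basis[OF assms(2)]])
  then show ?thesis using poly_lagrange_basis[OF assms] unfolding vandermonde_inv_def by (simp add: mult.commute)
qed

lemma vandermonde_inv_left:
  assumes q: "q < d" and k: "k < d"
  shows "(\<Sum>i<d. vandermonde_inv d u q i * u i ^ k) = (if q = k then 1 else 0)"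
proof -
  define M where "M = (\<Sum>i<d. smult (u i ^ k) (lagrange_basis d u i)) - monom 1 k"
  have "degree M < d" unfolding M_def
    using k degree_lagrange_basis
    by (intro degree_diff_less degree_sum_less degree_smult_le[THEN le_less_trans]) (auto simp: degree_monom_eq)
  have "poly M (u p) = 0" if "p < d" for p
    unfolding M_def using that by (simp add: poly_sum poly_monom poly_lagrange_basis sum_mult_delta_right)
  have "M = 0"
  proof (rule ccontr)
    assume M0: "M \<noteq> 0"
    have "inj_on u {..<d}"
    proof (rule inj_onI)
      fix p k assume "p \<in> {..<d}" "k \<in> {..<d}" "u p = u k"
      then show "p = k" using distinct_nodes[of p k] by auto
    qed
    moreover have "u ` {..<d} \<subseteq> {x. poly M x = 0}" using \<open>\<And>p. p < d \<Longrightarrow> poly M (u p) = 0\<close> by auto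
    then have "card (u ` {..<d}) \<le> degree M"
      using card_mono[OF poly_roots_finite[OF M0]] card_poly_roots_bound[OF M0] le_trans by blast
    ultimately show False using card_image \<open>degree M < d\<close> by fastforce
  qed
  then have "coeff M q = 0" by simp
  then show ?thesis unfolding M_def vandermonde_inv_def by (simp add: coeff_sum coeff_monom mult.commute)
qed

lemma fps_mat_inv_vandermonde:
  assumes p: "p < d" and q: "q < d"
  shows "fps_mat_inv d (\<lambda>p q. u p ^ q) p q = vandermonde_inv d u p q"
proof -
  let ?U = "\<lambda>p q. u p ^ q" and ?W = "vandermonde_inv d u" and ?V = "fps_mat_inv d (\<lambda>p q. u p ^ q)"
  have "(\<forall>p<d. \<forall>q<d. (\<Sum>k<d. ?U p k * ?V k q) = (if p = q then 1 else 0)) \<and>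
     (\<forall>p<d. \<forall>q<d. (\<Sum>k<d. ?V p k * ?U k q) = (if p = q then 1 else 0))"
    unfolding fps_mat_inv_def
    by (rule someI[of _ ?W]) (simp add: vandermonde_inv_right vandermonde_inv_left)
  then have V: "\<And>s. s < d \<Longrightarrow> (\<Sum>k<d. ?V p k * u k ^ s) = (if p = s then 1 else 0)" using p by blast
  have "?V p q = (\<Sum>k<d. ?V p k * (if q = k then 1 else 0))"
    using q by (simp add: sum_mult_delta_right)
  also have "\<dots> = (\<Sum>k<d. ?V p k * (\<Sum>s<d. u k ^ s * ?W s q))"
    using q by (intro sum.cong) (auto simp: vandermonde_inv_right)
  also have "\<dots> = (\<Sum>k<d. \<Sum>s<d. ?V p k * u k ^ s * ?W s q)"
    by (simp add: sum_distrib_left mult_ac)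
  also have "\<dots> = (\<Sum>s<d. (\<Sum>k<d. ?V p k * u k ^ s) * ?W s q)"
    by (subst sum.swap) (simp add: sum_distrib_right)
  also have "\<dots> = ?W p q" using p by (simp add: V sum_mult_delta_left)
  finally show ?thesis .
qed

lemma vandermonde_eq_0:
  assumes h: "\<And>i. i < d \<Longrightarrow> (\<Sum>j<d. c j * u i ^ j) = 0" and q: "q < d"
  shows "c q = 0"
proof -
  have "c q = (\<Sum>j<d. c j * (\<Sum>i<d. vandermonde_inv d u q i * u i ^ j))"
    using q by (simp add: vandermonde_inv_left sum_mult_delta_right)
  also have "\<dots> = (\<Sum>j<d. \<Sum>i<d. vandermonde_inv d u q i * (c j * u i ^ j))"
    by (simp add: sum_distrib_left mult_ac)
  also have "\<dots> = (\<Sum>i<d. vandermonde_inv d u q i * (\<Sum>j<d. c j * u i ^ j))"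
    by (subst sum.swap) (simp add: sum_distrib_left)
  also have "\<dots> = 0" using h by simp
  finally show ?thesis .
qed

end

section \<open>The branches of the inverse of \<open>f\<close>\<close>

locale etale_setting = nonarch_abs_field v for v :: "'k::field_char_0 \<Rightarrow> real" +
  fixes opn :: bool and f :: "'k fps" and d r :: nat and P :: "nat \<Rightarrow> 'k fps"
    and b :: 'k and a :: "nat \<Rightarrow> 'k" and u :: "nat \<Rightarrow> 'k fps"
    and G :: "nat \<Rightarrow> nat \<Rightarrow> 'k fps" and Y :: "nat \<Rightarrow> nat \<Rightarrow> nat \<Rightarrow> 'k fps"
  assumes etale: "finite_etale_disc opn v f d"
    and P_inO: "\<forall>j<d. inO opn v (P j)"
    and P_f: "\<forall>x\<in>disc opn v. (\<Sum>j<d. feval v (P j) (feval v f x) * x ^ j) + x ^ d = 0"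
    and b_disc: "b \<in> disc opn v"
    and a_inj: "inj_on a {..<d}"
    and a_fibre: "a ` {..<d} = {x \<in> disc opn v. feval v f x = b}"
    and u_branch: "\<forall>i<d. u i $ 0 = a i \<and> (\<exists>\<rho>>0. \<rho> \<le> 1 \<and> conv_ball v (u i) \<rho> \<and>
           (\<forall>y. v (y - b) < \<rho> \<longrightarrow>
              (\<Sum>j<d. feval v (P j) y * feval v (u i) (y - b) ^ j) + feval v (u i) (y - b) ^ d = 0))"
    and G_inO: "\<forall>m<r. \<forall>l<r. inO opn v (G m l)"
    and Y_basis: "\<forall>i<d. fam_basis (horiz_t opn v r G (a i)) (Y i) {..<r}"
begin

text \<open>Local coordinates centred at \<open>0\<close>: \<open>f_at i\<close> is \<open>t \<mapsto> f (a\<^sub>i + t) - b\<close> and \<open>u_at i\<close> is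
  \<open>s \<mapsto> u\<^sub>i (b + s) - a\<^sub>i\<close>; they turn out to be compositional inverses.\<close>

definition f_at :: "nat \<Rightarrow> 'k fps" where
  "f_at i = recenter f (a i) - fps_const b"

definition u_at :: "nat \<Rightarrow> 'k fps" where
  "u_at i = u i - fps_const (a i)"

definition P_at :: "nat \<Rightarrow> 'k fps" where
  "P_at j = recenter (P j) b"

definition df_inv :: "'k fps" where
  "df_inv = dinv opn v f"

lemma f_inO: "inO opn v f"
  using etale unfolding finite_etale_disc_def by simp

lemma df_inv: "inO opn v df_inv" "df_inv * fps_deriv f = 1"
proof -
  have "\<exists>g. inO opn v g \<and> g * fps_deriv f = 1" using etale unfolding finite_etale_disc_def by simp
  then show "inO opn v df_inv" "df_inv * fps_deriv f = 1"
    unfolding df_inv_def dinv_def by (metis (mono_tags, lifting) someI_ex)+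
qed

lemma a_in_disc: "i < d \<Longrightarrow> a i \<in> disc opn v"
  and feval_f_a: "i < d \<Longrightarrow> feval v f (a i) = b"
  using a_fibre by blast+

lemma f_at_nth_0: "i < d \<Longrightarrow> f_at i $ 0 = 0"
  unfolding f_at_def using recenter_nth_0[OF fps_conv_at_inO[OF f_inO a_in_disc]] feval_f_a by simp

lemma u_at_nth_0: "i < d \<Longrightarrow> u_at i $ 0 = 0"
  unfolding u_at_def using u_branch by simp

lemma feval_f_at:
  assumes "i < d" "v z < 1"
  shows "fps_conv_at (f_at i) z" "feval v (f_at i) z = feval v f (a i + z) - b"
  using feval_recenter_inO[OF f_inO a_in_disc[OF assms(1)] assms(2)] unfolding f_at_def
  by (simp_all add: fps_conv_at_diff fps_conv_at_const feval_diff feval_const)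

lemma feval_P_at:
  assumes "j < d" "v z < 1"
  shows "fps_conv_at (P_at j) z" "feval v (P_at j) z = feval v (P j) (b + z)"
  using feval_recenter_inO[of opn "P j" b z] P_inO b_disc assms unfolding P_at_def by simp_all

lemma conv_germ_f_at: "i < d \<Longrightarrow> conv_germ (f_at i)"
  unfolding conv_germ_def using eventually_v_less_v_near0[OF zero_less_one]
  by (rule eventually_mono) (rule feval_f_at)

lemma conv_germ_P_at: "j < d \<Longrightarrow> conv_germ (P_at j)"
  unfolding conv_germ_def using eventually_v_less_v_near0[OF zero_less_one]
  by (rule eventually_mono) (rule feval_P_at)

lemma u_branch_near0:
  assumes "i < d"
  shows "conv_germ (u i)"
    "\<forall>\<^sub>F z in v_near0. (\<Sum>j<d. feval v (P j) (b + z) * feval v (u i) z ^ j) + feval v (u i) z ^ d = 0"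
proof -
  have "\<exists>\<rho>>0. \<rho> \<le> 1 \<and> (\<forall>l<1. conv_ball v ((\<lambda>_. u i) l) \<rho>) \<and> (\<forall>y. v (y - b) < \<rho> \<longrightarrow>
      (\<Sum>j<d. feval v (P j) y * feval v (u i) (y - b) ^ j) + feval v (u i) (y - b) ^ d = 0)"
    using u_branch assms by auto
  then have "\<forall>\<^sub>F z in v_near0. (\<forall>l<1. fps_conv_at (u i) z)
      \<and> (\<Sum>j<d. feval v (P j) (b + z) * feval v (u i) (b + z - b) ^ j) + feval v (u i) (b + z - b) ^ d = 0"
    unfolding conv_ball_condition_iff_eventually .
  then show "conv_germ (u i)"
    "\<forall>\<^sub>F z in v_near0. (\<Sum>j<d. feval v (P j) (b + z) * feval v (u i) z ^ j) + feval v (u i) z ^ d = 0"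
    unfolding conv_germ_def by (auto elim!: eventually_mono simp: less_Suc_eq)
qed

lemma conv_germ_u_at: "i < d \<Longrightarrow> conv_germ (u_at i)"
  unfolding u_at_def by (intro conv_germ_diff u_branch_near0 conv_germ_const)

lemma u_root:
  assumes i: "i < d"
  shows "(\<Sum>j<d. P_at j * u i ^ j) + u i ^ d = 0"
proof (rule fps_eq_0_if_feval_eq_0)
  have near: "\<forall>\<^sub>F z in v_near0. v z < 1 \<and> fps_conv_at (u i) z"
    using eventually_v_less_v_near0[OF zero_less_one] u_branch_near0(1)[OF i]
    unfolding conv_germ_def by (rule eventually_conj)
  then show "\<forall>\<^sub>F z in v_near0. fps_conv_at ((\<Sum>j<d. P_at j * u i ^ j) + u i ^ d) z"
    by eventually_elim (simp add: feval_monic_poly feval_P_at)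
  show "\<forall>\<^sub>F z in v_near0. feval v ((\<Sum>j<d. P_at j * u i ^ j) + u i ^ d) z = 0"
    using near u_branch_near0(2)[OF i] by eventually_elim (simp add: feval_monic_poly feval_P_at)
qed

text \<open>\<open>s = f(t)\<close> satisfies \<open>P(s, t) = 0\<close>; written in the local coordinate \<open>t = a\<^sub>i + X\<close>.\<close>

lemma shifted_X_root:
  assumes i: "i < d"
  shows "(\<Sum>j<d. (P_at j oo f_at i) * (fps_X + fps_const (a i)) ^ j) + (fps_X + fps_const (a i)) ^ d = 0"
proof (rule fps_eq_0_if_feval_eq_0)
  have "\<forall>j\<in>{..<d}. \<forall>\<^sub>F z in v_near0. fps_conv_at (P_at j oo f_at i) z
      \<and> feval v (P_at j oo f_at i) z = feval v (P_at j) (feval v (f_at i) z)"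
    using feval_compose[OF f_at_nth_0[OF i] conv_germ_f_at[OF i] conv_germ_P_at] by blast
  then have "\<forall>\<^sub>F z in v_near0. \<forall>j\<in>{..<d}. fps_conv_at (P_at j oo f_at i) z
      \<and> feval v (P_at j oo f_at i) z = feval v (P_at j) (feval v (f_at i) z)"
    by (rule eventually_ball_finite[OF finite_lessThan])
  with eventually_v_less_v_near0[OF zero_less_one] eventually_v_feval_less_1[OF f_at_nth_0[OF i] conv_germ_f_at[OF i]]
  have near: "\<forall>\<^sub>F z in v_near0. v z < 1 \<and>
      (\<forall>j<d. fps_conv_at (P_at j oo f_at i) z \<and> feval v (P_at j oo f_at i) z = feval v (P j) (feval v f (a i + z)))"
    by eventually_elim (simp add: feval_P_at feval_f_at[OF i])
  have X: "fps_conv_at (fps_X + fps_const (a i)) z" "feval v (fps_X + fps_const (a i)) z = a i + z" for z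
    by (simp_all add: fps_conv_at_add fps_conv_at_X fps_conv_at_const feval_add feval_X feval_const)
  from near show "\<forall>\<^sub>F z in v_near0.
      fps_conv_at ((\<Sum>j<d. (P_at j oo f_at i) * (fps_X + fps_const (a i)) ^ j) + (fps_X + fps_const (a i)) ^ d) z"
    by eventually_elim (simp add: feval_monic_poly X)
  from near show "\<forall>\<^sub>F z in v_near0.
      feval v ((\<Sum>j<d. (P_at j oo f_at i) * (fps_X + fps_const (a i)) ^ j) + (fps_X + fps_const (a i)) ^ d) z = 0"
  proof eventually_elim
    case (elim z)
    then have "a i + z \<in> disc opn v" using disc_add[OF a_in_disc[OF i]] by blast
    then show ?case using elim P_f by (simp add: feval_monic_poly X)
  qed
qed

lemma f_at_nth_1: "i < d \<Longrightarrow> f_at i $ 1 \<noteq> 0"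
proof -
  assume i: "i < d"
  have fa: "fps_conv_at f (a i)" using fps_conv_at_inO[OF f_inO a_in_disc[OF i]] .
  have "f_at i $ 1 = fps_deriv (recenter f (a i)) $ 0" unfolding f_at_def by simp
  also have "\<dots> = recenter (fps_deriv f) (a i) $ 0" using fps_deriv_recenter[OF fa] by simp
  also have "\<dots> = feval v (fps_deriv f) (a i)" by (rule recenter_nth_0[OF fps_conv_at_deriv[OF fa]])
  finally have "feval v df_inv (a i) * f_at i $ 1 = feval v (df_inv * fps_deriv f) (a i)"
    using feval_mult fps_conv_at_inO[OF df_inv(1) a_in_disc[OF i]] fps_conv_at_deriv[OF fa] by simp
  then show ?thesis using df_inv(2) by (auto simp: feval_1)
qed

lemma P_at_nth_0: "j < d \<Longrightarrow> P_at j $ 0 = feval v (P j) b"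
  unfolding P_at_def using recenter_nth_0 fps_conv_at_inO P_inO b_disc by blast

lemma P_at_simple_root:
  assumes i: "i < d"
  shows "(\<Sum>j<d. P_at j $ 0 * of_nat j * (a i) ^ (j - 1)) + of_nat d * (a i) ^ (d - 1) \<noteq> 0"
proof -
  have "(\<Sum>j<d. feval v (P j) b * of_nat j * a i ^ (j - 1)) + of_nat d * a i ^ (d - 1) \<noteq> 0"
  proof (rule monic_deriv_nonzero_at_distinct_roots[OF a_inj _ i])
    fix k assume "k < d"
    then show "(\<Sum>j<d. feval v (P j) b * a k ^ j) + a k ^ d = 0"
      using P_f a_in_disc feval_f_a by force
  qed
  then show ?thesis using P_at_nth_0 by simp
qed

text \<open>Both \<open>u\<^sub>i\<close> and \<open>a\<^sub>i + (f_at i)\<^sup>-\<^sup>1\<close> are roots of \<open>P(b + s, -)\<close> with constant term the simple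
  root \<open>a\<^sub>i\<close> of \<open>P(b, -)\<close>.\<close>

lemma u_at_eq_fps_inv:
  assumes i: "i < d"
  shows "u_at i = fps_inv (f_at i)"
proof -
  define h where "h = fps_inv (f_at i)"
  have h0: "h $ 0 = 0" unfolding h_def by (simp add: fps_inv_def)
  have f_h: "f_at i oo h = fps_X" unfolding h_def by (rule fps_inv_right[OF f_at_nth_0[OF i] f_at_nth_1[OF i]])
  have shift: "(fps_X + fps_const (a i)) oo h = h + fps_const (a i)"
    by (simp add: fps_compose_add_distrib fps_X_fps_compose_startby0[OF h0])
  have P_h: "(P_at j oo f_at i) oo h = P_at j" for j
    using fps_compose_assoc[OF h0 f_at_nth_0[OF i], of "P_at j"] f_h by simp
  have "((\<Sum>j<d. (P_at j oo f_at i) * (fps_X + fps_const (a i)) ^ j) + (fps_X + fps_const (a i)) ^ d) oo h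
      = (\<Sum>j<d. P_at j * (h + fps_const (a i)) ^ j) + (h + fps_const (a i)) ^ d"
    by (simp add: fps_compose_add_distrib fps_compose_sum_distrib fps_compose_mult_distrib[OF h0]
        fps_compose_power[OF h0, symmetric] shift P_h fps_X_fps_compose_startby0[OF h0])
  then have "(\<Sum>j<d. P_at j * (h + fps_const (a i)) ^ j) + (h + fps_const (a i)) ^ d = 0"
    using shifted_X_root[OF i] by simp
  then have "u i = h + fps_const (a i)"
    using fps_monic_root_unique[OF _ u_root[OF i]] u_branch P_at_simple_root[OF i] i h0 by simp
  then show ?thesis unfolding u_at_def h_def by simp
qed

lemma f_at_compose_u_at: "i < d \<Longrightarrow> f_at i oo u_at i = fps_X"
  using u_at_eq_fps_inv fps_inv_right f_at_nth_0 f_at_nth_1 by metis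

lemma u_at_compose_f_at: "i < d \<Longrightarrow> u_at i oo f_at i = fps_X"
  using u_at_eq_fps_inv fps_inv f_at_nth_0 f_at_nth_1 by metis

lemma u_at_nonzero: "i < d \<Longrightarrow> u_at i \<noteq> 0"
  using f_at_compose_u_at f_at_nth_0 by (metis fps_X_neq_zero fps_compose_0_right fps_const_0_eq_0)

lemma feval_u_near0:
  assumes i: "i < d"
  shows "\<forall>\<^sub>F z in v_near0. v z < 1 \<and> fps_conv_at (u i) z \<and> v (feval v (u_at i) z) < 1
    \<and> feval v (u i) z = a i + feval v (u_at i) z \<and> feval v (u i) z \<in> disc opn v
    \<and> feval v f (feval v (u i) z) = b + z"
proof -
  note eventually_v_feval_less_1[OF u_at_nth_0[OF i] conv_germ_u_at[OF i]]
  moreover note eventually_v_less_v_near0[OF zero_less_one] u_branch_near0(1)[OF i, unfolded conv_germ_def]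
    feval_compose[OF u_at_nth_0[OF i] conv_germ_u_at[OF i] conv_germ_f_at[OF i]]
  ultimately show ?thesis
  proof eventually_elim
    case (elim z)
    define w where "w = feval v (u_at i) z"
    have u: "feval v (u i) z = a i + w"
      unfolding w_def u_at_def using elim by (simp add: feval_diff fps_conv_at_const feval_const)
    have "feval v (f_at i) w = z"
      using elim unfolding w_def f_at_compose_u_at[OF i] by (simp add: feval_X)
    moreover have "a i + w \<in> disc opn v" using disc_add[OF a_in_disc[OF i]] elim unfolding w_def by blast
    ultimately show ?case
      using elim u feval_f_at[OF i] unfolding w_def by (auto simp: algebra_simps)
  qed
qed

lemma decomp_rel_decomp: "inO opn v g \<Longrightarrow> decomp_rel opn v f d g (decomp opn v f d g)"
  using etale unfolding finite_etale_disc_def decomp_def by (metis theI')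

lemma decomp_inO: "inO opn v g \<Longrightarrow> j < d \<Longrightarrow> inO opn v (decomp opn v f d g j)"
  using decomp_rel_decomp unfolding decomp_rel_def by blast

text \<open>The defining identity \<open>g(t) = \<Sum>\<^sub>j c\<^sub>j(f(t)) t\<^sup>j\<close> of the decomposition, read along the branch
  \<open>t = u\<^sub>i(s)\<close>.\<close>

lemma recenter_compose_u_at:
  assumes g: "inO opn v g" and i: "i < d"
  shows "recenter g (a i) oo u_at i = (\<Sum>j<d. recenter (decomp opn v f d g j) b * u i ^ j)"
proof (rule fps_eq_if_feval_eq)
  define cs where "cs = decomp opn v f d g"
  have cs: "\<And>j. j < d \<Longrightarrow> inO opn v (cs j)"
    and g_cs: "\<And>x. x \<in> disc opn v \<Longrightarrow> feval v g x = (\<Sum>j<d. feval v (cs j) (feval v f x) * x ^ j)"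
    using decomp_rel_decomp[OF g] unfolding cs_def decomp_rel_def by auto
  have near: "\<forall>\<^sub>F z in v_near0. fps_conv_at (recenter g (a i) oo u_at i) z \<and>
      feval v (recenter g (a i) oo u_at i) z = feval v (recenter g (a i)) (feval v (u_at i) z)"
    by (rule feval_compose[OF u_at_nth_0[OF i] conv_germ_u_at[OF i] conv_germ_recenter_inO[OF g a_in_disc[OF i]]])
  then show "\<forall>\<^sub>F z in v_near0. fps_conv_at (recenter g (a i) oo u_at i) z"
    by (rule eventually_mono) blast
  show "\<forall>\<^sub>F z in v_near0. fps_conv_at (\<Sum>j<d. recenter (cs j) b * u i ^ j) z"
    using feval_u_near0[OF i]
    by (rule eventually_mono)
      (auto intro!: fps_conv_at_sum fps_conv_at_mult fps_conv_at_power feval_recenter_inO(1)[OF cs b_disc])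
  show "\<forall>\<^sub>F z in v_near0. feval v (recenter g (a i) oo u_at i) z = feval v (\<Sum>j<d. recenter (cs j) b * u i ^ j) z"
    using near feval_u_near0[OF i]
  proof eventually_elim
    case (elim z)
    then have disc: "feval v (u i) z \<in> disc opn v" and fu: "feval v f (feval v (u i) z) = b + z" by blast+
    from elim have "feval v (recenter g (a i) oo u_at i) z = feval v g (feval v (u i) z)"
      by (simp add: feval_recenter_inO[OF g a_in_disc[OF i]])
    also have "\<dots> = (\<Sum>j<d. feval v (cs j) (b + z) * feval v (u i) z ^ j)"
      using g_cs[OF disc] unfolding fu .
    also have "\<dots> = feval v (\<Sum>j<d. recenter (cs j) b * u i ^ j) z"
    proof -
      have rc: "fps_conv_at (recenter (cs j) b) z" "feval v (recenter (cs j) b) z = feval v (cs j) (b + z)"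
        if "j < d" for j
        using feval_recenter_inO[OF cs[OF that] b_disc] elim by blast+
      have "feval v (\<Sum>j<d. recenter (cs j) b * u i ^ j) z
          = (\<Sum>j<d. feval v (recenter (cs j) b) z * feval v (u i ^ j) z)"
        by (rule feval_sum_mult(2)) (use rc elim in \<open>auto intro: fps_conv_at_power\<close>)
      then show ?thesis using rc elim by (simp add: feval_power)
    qed
    finally show ?case .
  qed
qed

section \<open>Horizontal elements as formal systems\<close>

lemma feval_horiz_t_system:
  assumes \<alpha>: "\<alpha> \<in> disc opn v" and m: "m < r" and z: "v z < 1" and Z: "\<forall>l\<in>{..<r}. fps_conv_at (Z l) z"
  shows "fps_conv_at (fps_deriv (Z m) + (\<Sum>l<r. recenter (G m l) \<alpha> * Z l)) z"
    "feval v (fps_deriv (Z m) + (\<Sum>l<r. recenter (G m l) \<alpha> * Z l)) z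
      = feval v (fps_deriv (Z m)) z + (\<Sum>l<r. feval v (G m l) (\<alpha> + z) * feval v (Z l) z)"
proof -
  have G: "fps_conv_at (recenter (G m l) \<alpha>) z" "feval v (recenter (G m l) \<alpha>) z = feval v (G m l) (\<alpha> + z)"
    if "l < r" for l
    using feval_recenter_inO[of opn "G m l" \<alpha> z] G_inO m that \<alpha> z by simp_all
  have Zm: "fps_conv_at (fps_deriv (Z m)) z" using Z m by (simp add: fps_conv_at_deriv)
  have sum: "fps_conv_at (\<Sum>l<r. recenter (G m l) \<alpha> * Z l) z"
    "feval v (\<Sum>l<r. recenter (G m l) \<alpha> * Z l) z = (\<Sum>l<r. feval v (recenter (G m l) \<alpha>) z * feval v (Z l) z)"
    by (rule feval_sum_mult; use G Z in simp)+
  show "fps_conv_at (fps_deriv (Z m) + (\<Sum>l<r. recenter (G m l) \<alpha> * Z l)) z"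
    using Zm sum(1) by (rule fps_conv_at_add)
  show "feval v (fps_deriv (Z m) + (\<Sum>l<r. recenter (G m l) \<alpha> * Z l)) z
      = feval v (fps_deriv (Z m)) z + (\<Sum>l<r. feval v (G m l) (\<alpha> + z) * feval v (Z l) z)"
    using feval_add[OF Zm sum(1)] sum(2) G(2) by simp
qed

lemma horiz_t_iff:
  assumes \<alpha>: "\<alpha> \<in> disc opn v"
  shows "Z \<in> horiz_t opn v r G \<alpha> \<longleftrightarrow> (\<forall>l\<ge>r. Z l = 0) \<and> (\<forall>l<r. conv_germ (Z l))
    \<and> (\<forall>m<r. fps_deriv (Z m) + (\<Sum>l<r. recenter (G m l) \<alpha> * Z l) = 0)"
proof -
  have "(\<forall>\<^sub>F z in v_near0. (\<forall>l\<in>{..<r}. fps_conv_at (Z l) z) \<and>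
        (\<forall>m\<in>{..<r}. feval v (fps_deriv (Z m)) z + (\<Sum>l<r. feval v (G m l) (\<alpha> + z) * feval v (Z l) z) = 0))
    \<longleftrightarrow> (\<forall>l\<in>{..<r}. conv_germ (Z l)) \<and> (\<forall>m\<in>{..<r}. fps_deriv (Z m) + (\<Sum>l<r. recenter (G m l) \<alpha> * Z l) = 0)"
    using eventually_v_less_v_near0[OF zero_less_one]
    by (intro eventually_system_iff) (auto elim!: eventually_mono simp: feval_horiz_t_system[OF \<alpha>])
  from this[unfolded Ball_def lessThan_iff] show ?thesis
    unfolding horiz_t_def mem_Collect_eq conv_ball_condition_iff_eventually by simp
qed

text \<open>\<open>D\<^sub>s (t\<^sup>i e\<^sub>l) = f'(t)\<^sup>-\<^sup>1 (i t\<^sup>i\<^sup>-\<^sup>1 e\<^sub>l + t\<^sup>i \<Sum>\<^sub>m G\<^sub>m\<^sub>l e\<^sub>m)\<close>; its \<open>e\<^sub>m\<close>-coefficient is \<open>Ds_entry m l i\<close>, and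
  \<^const>\<open>Ds_mat\<close> expands it in the basis \<open>1, t, \<dots>, t\<^sup>d\<^sup>-\<^sup>1\<close> over \<open>O\<^sub>s\<close>.\<close>

definition Ds_entry :: "nat \<Rightarrow> nat \<Rightarrow> nat \<Rightarrow> 'k fps" where
  "Ds_entry m l i = df_inv * (fps_deriv (fps_X ^ i) * (if m = l then 1 else 0) + fps_X ^ i * G m l)"

lemma Ds_mat_eq: "Ds_mat opn v f d G m j l i = decomp opn v f d (Ds_entry m l i) j"
  unfolding Ds_mat_def Ds_entry_def df_inv_def ..

lemma Ds_entry_inO: "m < r \<Longrightarrow> l < r \<Longrightarrow> inO opn v (Ds_entry m l i)"
  unfolding Ds_entry_def using df_inv(1) G_inO
  by (intro inO_mult inO_add inO_deriv inO_power inO_X) (auto simp: inO_const[of opn 1, simplified] inO_const[of opn 0, simplified])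

lemma Ds_mat_inO: "m < r \<Longrightarrow> l < r \<Longrightarrow> j < d \<Longrightarrow> inO opn v (Ds_mat opn v f d G m j l i)"
  unfolding Ds_mat_eq by (rule decomp_inO[OF Ds_entry_inO])

definition Ds_formal :: "(nat \<Rightarrow> 'k fps) \<Rightarrow> nat \<Rightarrow> nat \<Rightarrow> 'k fps" where
  "Ds_formal C m j = fps_deriv (C (m * d + j)) + (\<Sum>l<r. \<Sum>i<d. recenter (Ds_mat opn v f d G m j l i) b * C (l * d + i))"

lemma feval_Ds_formal:
  assumes m: "m < r" and j: "j < d" and z: "v z < 1" and C: "\<forall>q\<in>{..<r * d}. fps_conv_at (C q) z"
  shows "fps_conv_at (Ds_formal C m j) z"
    "feval v (Ds_formal C m j) z = feval v (fps_deriv (C (m * d + j))) z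
      + (\<Sum>l<r. \<Sum>i<d. feval v (Ds_mat opn v f d G m j l i) (b + z) * feval v (C (l * d + i)) z)"
proof -
  have D: "fps_conv_at (recenter (Ds_mat opn v f d G m j l i) b) z"
    "feval v (recenter (Ds_mat opn v f d G m j l i) b) z = feval v (Ds_mat opn v f d G m j l i) (b + z)"
    if "l < r" for l i
    using feval_recenter_inO[OF Ds_mat_inO[OF m that j] b_disc z] by simp_all
  have C': "fps_conv_at (C (l * d + i)) z" if "l < r" "i < d" for l i
    using C index_less_mult[OF that] by simp
  have row: "fps_conv_at (\<Sum>i<d. recenter (Ds_mat opn v f d G m j l i) b * C (l * d + i)) z"
    "feval v (\<Sum>i<d. recenter (Ds_mat opn v f d G m j l i) b * C (l * d + i)) z
      = (\<Sum>i<d. feval v (Ds_mat opn v f d G m j l i) (b + z) * feval v (C (l * d + i)) z)"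
    if "l < r" for l
    using feval_sum_mult[of "{..<d}" "\<lambda>i. recenter (Ds_mat opn v f d G m j l i) b" z "\<lambda>i. C (l * d + i)"]
      D[OF that] C'[OF that] by simp_all
  have Cm: "fps_conv_at (fps_deriv (C (m * d + j))) z" using C' m j by (simp add: fps_conv_at_deriv)
  have S: "fps_conv_at (\<Sum>l<r. \<Sum>i<d. recenter (Ds_mat opn v f d G m j l i) b * C (l * d + i)) z"
    by (rule fps_conv_at_sum) (use row(1) in simp)
  show "fps_conv_at (Ds_formal C m j) z"
    unfolding Ds_formal_def by (rule fps_conv_at_add[OF Cm S])
  have "feval v (\<Sum>l<r. \<Sum>i<d. recenter (Ds_mat opn v f d G m j l i) b * C (l * d + i)) z
      = (\<Sum>l<r. feval v (\<Sum>i<d. recenter (Ds_mat opn v f d G m j l i) b * C (l * d + i)) z)"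
    by (rule feval_sum) (use row(1) in simp)
  then show "feval v (Ds_formal C m j) z = feval v (fps_deriv (C (m * d + j))) z
      + (\<Sum>l<r. \<Sum>i<d. feval v (Ds_mat opn v f d G m j l i) (b + z) * feval v (C (l * d + i)) z)"
    unfolding Ds_formal_def feval_add[OF Cm S] using row(2) by simp
qed

lemma horiz_s_iff:
  "C \<in> horiz_s opn v r d f G b \<longleftrightarrow> (\<forall>q\<ge>r * d. C q = 0) \<and> (\<forall>q<r * d. conv_germ (C q))
    \<and> (\<forall>m<r. \<forall>j<d. Ds_formal C m j = 0)"
proof -
  have "(\<forall>\<^sub>F z in v_near0. (\<forall>q\<in>{..<r * d}. fps_conv_at (C q) z) \<and>
        (\<forall>mj\<in>{..<r} \<times> {..<d}. (\<lambda>(m, j). feval v (fps_deriv (C (m * d + j))) z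
          + (\<Sum>l<r. \<Sum>i<d. feval v (Ds_mat opn v f d G m j l i) (b + z) * feval v (C (l * d + i)) z)) mj = 0))
    \<longleftrightarrow> (\<forall>q\<in>{..<r * d}. conv_germ (C q)) \<and> (\<forall>mj\<in>{..<r} \<times> {..<d}. (\<lambda>(m, j). Ds_formal C m j) mj = 0)"
    using eventually_v_less_v_near0[OF zero_less_one]
    by (intro eventually_system_iff) (auto elim!: eventually_mono simp: feval_Ds_formal)
  from this[unfolded split_paired_Ball_Sigma, unfolded Ball_def lessThan_iff prod.case] show ?thesis
    unfolding horiz_s_def mem_Collect_eq conv_ball_condition_iff_eventually by simp
qed

text \<open>The chain rule for \<open>f \<circ> u\<^sub>i = id\<close> gives \<open>u\<^sub>i' = 1 / f'(u\<^sub>i)\<close>.\<close>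

lemma recenter_df_inv_compose_u_at:
  assumes i: "i < d"
  shows "recenter df_inv (a i) oo u_at i = fps_deriv (u i)"
proof -
  have ai: "a i \<in> disc opn v" by (rule a_in_disc[OF i])
  define F' where "F' = recenter (fps_deriv f) (a i)"
  have inv: "recenter df_inv (a i) * F' = 1"
    unfolding F'_def using recenter_mult[OF df_inv(1) inO_deriv[OF f_inO] ai] df_inv(2)
      recenter_const[OF ai, of 1] by simp
  have "F' = fps_deriv (f_at i)"
    unfolding F'_def f_at_def using fps_deriv_recenter[OF fps_conv_at_inO[OF f_inO ai]] by simp
  then have chain: "(F' oo u_at i) * fps_deriv (u_at i) = 1"
    using arg_cong[OF f_at_compose_u_at[OF i], of fps_deriv] by (simp add: fps_compose_deriv[OF u_at_nth_0[OF i]])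
  have inv_u: "(recenter df_inv (a i) oo u_at i) * (F' oo u_at i) = 1"
    using inv fps_compose_mult_distrib[OF u_at_nth_0[OF i], of "recenter df_inv (a i)" F'] by simp
  have "recenter df_inv (a i) oo u_at i
      = (recenter df_inv (a i) oo u_at i) * ((F' oo u_at i) * fps_deriv (u_at i))"
    using chain by simp
  also have "\<dots> = fps_deriv (u_at i)" using inv_u by (simp add: mult.assoc[symmetric])
  finally show ?thesis unfolding u_at_def by simp
qed

lemma X_shift_compose_u_at: "i < d \<Longrightarrow> (fps_X + fps_const (a i)) oo u_at i = u i"
  using u_at_nth_0 unfolding u_at_def by (simp add: fps_compose_add_distrib fps_X_fps_compose_startby0)

definition G_u :: "nat \<Rightarrow> nat \<Rightarrow> nat \<Rightarrow> 'k fps" where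
  "G_u i m l = recenter (G m l) (a i) oo u_at i"

lemma recenter_Ds_entry_compose_u_at:
  assumes i: "i < d" and m: "m < r" and l: "l < r"
  shows "recenter (Ds_entry m l k) (a i) oo u_at i
    = fps_deriv (u i) * (of_nat k * u i ^ (k - 1) * (if m = l then 1 else 0) + u i ^ k * G_u i m l)"
proof -
  have ai: "a i \<in> disc opn v" by (rule a_in_disc[OF i])
  have u0: "u_at i $ 0 = 0" by (rule u_at_nth_0[OF i])
  define S where "S = fps_X + fps_const (a i)"
  define \<delta> where "\<delta> = (if m = l then 1 else 0 :: 'k fps)"
  have delta: "inO opn v \<delta>" "recenter \<delta> (a i) = \<delta>" "\<delta> oo u_at i = \<delta>"
    using inO_const[of opn 1] inO_const[of opn 0] recenter_const[OF ai, of 1] recenter_const[OF ai, of 0]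
    unfolding \<delta>_def by simp_all
  have X_k: "recenter (fps_X ^ k) (a i) = S ^ k"
    unfolding S_def using recenter_power[OF inO_X ai] recenter_X[OF ai] by simp
  have dX_k: "recenter (fps_deriv (fps_X ^ k)) (a i) = of_nat k * S ^ (k - 1)"
    using fps_deriv_recenter[OF fps_conv_at_inO[OF inO_power[OF inO_X] ai], of k, symmetric]
    unfolding X_k S_def by (simp add: fps_deriv_power')
  have G: "inO opn v (G m l)" using G_inO m l by simp
  have "recenter (Ds_entry m l k) (a i)
      = recenter df_inv (a i) * (of_nat k * S ^ (k - 1) * \<delta> + S ^ k * recenter (G m l) (a i))"
    unfolding Ds_entry_def \<delta>_def[symmetric] using G df_inv(1) delta
    by (simp add: recenter_mult[OF _ _ ai] recenter_add[OF _ _ ai] inO_mult inO_add inO_deriv inO_power inO_X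
        X_k dX_k)
  then have "recenter (Ds_entry m l k) (a i) oo u_at i
      = (recenter df_inv (a i) oo u_at i) * ((of_nat k oo u_at i) * (S oo u_at i) ^ (k - 1) * (\<delta> oo u_at i)
        + (S oo u_at i) ^ k * (recenter (G m l) (a i) oo u_at i))"
    by (simp only: fps_compose_mult_distrib[OF u0] fps_compose_add_distrib fps_compose_power[OF u0])
  also have "(of_nat k :: 'k fps) oo u_at i = of_nat k" by (metis fps_of_nat fps_const_compose)
  finally have "recenter (Ds_entry m l k) (a i) oo u_at i
      = fps_deriv (u i) * (of_nat k * u i ^ (k - 1) * \<delta> + u i ^ k * G_u i m l)"
    unfolding recenter_df_inv_compose_u_at[OF i] S_def X_shift_compose_u_at[OF i] delta(3) G_u_def .
  then show ?thesis unfolding \<delta>_def .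
qed

lemma Ds_mat_along_u:
  assumes i: "i < d" and m: "m < r" and l: "l < r"
  shows "(\<Sum>j<d. recenter (Ds_mat opn v f d G m j l k) b * u i ^ j)
    = fps_deriv (u i) * (of_nat k * u i ^ (k - 1) * (if m = l then 1 else 0) + u i ^ k * G_u i m l)"
  unfolding Ds_mat_eq recenter_compose_u_at[OF Ds_entry_inO[OF m l] i, symmetric]
  by (rule recenter_Ds_entry_compose_u_at[OF i m l])

text \<open>The \<open>m\<close>-th component of a vector of \<open>M\<^sub>\<phi>\<close>, read on the branch \<open>t = u\<^sub>i(s)\<close>.\<close>

definition branch :: "nat \<Rightarrow> (nat \<Rightarrow> 'k fps) \<Rightarrow> nat \<Rightarrow> 'k fps" where
  "branch i C m = (\<Sum>j<d. C (m * d + j) * u i ^ j)"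

lemma fps_deriv_branch:
  "fps_deriv (branch i C m) = (\<Sum>j<d. fps_deriv (C (m * d + j)) * u i ^ j)
    + fps_deriv (u i) * (\<Sum>k<d. C (m * d + k) * (of_nat k * u i ^ (k - 1)))"
  unfolding branch_def fps_deriv_sum fps_deriv_mult fps_deriv_power'
  by (simp add: sum.distrib sum_distrib_left mult_ac add.commute)

lemma sum_Ds_mat_terms_along_u:
  assumes i: "i < d" and m: "m < r"
  shows "(\<Sum>j<d. (\<Sum>l<r. \<Sum>k<d. recenter (Ds_mat opn v f d G m j l k) b * C (l * d + k)) * u i ^ j)
    = fps_deriv (u i) * (\<Sum>k<d. C (m * d + k) * (of_nat k * u i ^ (k - 1)))
      + fps_deriv (u i) * (\<Sum>l<r. G_u i m l * branch i C l)"
proof -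
  have "(\<Sum>j<d. (\<Sum>l<r. \<Sum>k<d. recenter (Ds_mat opn v f d G m j l k) b * C (l * d + k)) * u i ^ j)
      = (\<Sum>l<r. \<Sum>k<d. C (l * d + k) * (\<Sum>j<d. recenter (Ds_mat opn v f d G m j l k) b * u i ^ j))"
    unfolding sum_distrib_right sum_distrib_left
    by (subst sum.swap, rule sum.cong[OF refl], subst sum.swap) (simp add: mult_ac)
  also have "\<dots> = (\<Sum>l<r. \<Sum>k<d. (if m = l then fps_deriv (u i) * (C (l * d + k) * (of_nat k * u i ^ (k - 1))) else 0)
      + fps_deriv (u i) * (G_u i m l * (C (l * d + k) * u i ^ k)))"
  proof (intro sum.cong refl)
    fix l k assume "l \<in> {..<r}"
    then have l: "l < r" by simp
    show "C (l * d + k) * (\<Sum>j<d. recenter (Ds_mat opn v f d G m j l k) b * u i ^ j)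
      = (if m = l then fps_deriv (u i) * (C (l * d + k) * (of_nat k * u i ^ (k - 1))) else 0)
        + fps_deriv (u i) * (G_u i m l * (C (l * d + k) * u i ^ k))"
      unfolding Ds_mat_along_u[OF i m l] by (simp add: algebra_simps)
  qed
  also have "\<dots> = (\<Sum>l<r. (if m = l then \<Sum>k<d. fps_deriv (u i) * (C (l * d + k) * (of_nat k * u i ^ (k - 1))) else 0)
      + fps_deriv (u i) * (G_u i m l * branch i C l))"
    by (intro sum.cong refl, cases "m = l") (simp_all add: sum.distrib sum_distrib_left branch_def mult_ac)
  also have "\<dots> = fps_deriv (u i) * (\<Sum>k<d. C (m * d + k) * (of_nat k * u i ^ (k - 1)))
      + fps_deriv (u i) * (\<Sum>l<r. G_u i m l * branch i C l)"
    using m by (simp add: sum.distrib sum_distrib_left)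
  finally show ?thesis .
qed

text \<open>Multiplying the \<open>(m, j)\<close>-th equation of \<open>D\<^sub>s\<close> by \<open>u\<^sub>i\<^sup>j\<close> and summing over \<open>j\<close> yields the \<open>m\<close>-th
  equation of \<open>D\<^sub>t\<close> pulled back along \<open>t = u\<^sub>i(s)\<close>.\<close>

lemma Ds_formal_along_u:
  assumes "i < d" "m < r"
  shows "(\<Sum>j<d. Ds_formal C m j * u i ^ j)
    = fps_deriv (branch i C m) + fps_deriv (u i) * (\<Sum>l<r. G_u i m l * branch i C l)"
  unfolding Ds_formal_def distrib_right sum.distrib sum_Ds_mat_terms_along_u[OF assms] fps_deriv_branch
  by (simp add: add_ac)

section \<open>The basis of horizontal elements at \<open>b\<close>\<close>

lemma fps_nodes_u: "fps_nodes d u"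
  using u_branch a_inj unfolding inj_on_def by unfold_locales auto

lemma conv_germ_vandermonde_inv:
  assumes i: "i < d"
  shows "conv_germ (vandermonde_inv d u q i)"
  unfolding vandermonde_inv_def lagrange_basis_def
proof (rule conv_germ_coeff_prod)
  fix k n assume k: "k \<in> {..<d} - {i}"
  have inv: "conv_germ (inverse (u i - u k))"
    using k i fps_nodes.distinct_nodes[OF fps_nodes_u, of i k]
    by (intro conv_germ_inverse conv_germ_diff u_branch_near0(1)) auto
  then have "conv_germ (- u k * inverse (u i - u k))"
    using k by (intro conv_germ_mult conv_germ_minus u_branch_near0(1)) auto
  then show "conv_germ (coeff [: - u k * inverse (u i - u k), inverse (u i - u k) :] n)"
    using inv by (cases n) (auto simp: conv_germ_0 coeff_pCons split: nat.splits)
qed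

definition Y_u :: "nat \<Rightarrow> nat \<Rightarrow> nat \<Rightarrow> 'k fps" where
  "Y_u i j m = Y i j m oo u_at i"

definition basis_vec :: "nat \<Rightarrow> nat \<Rightarrow> nat \<Rightarrow> 'k fps" where
  "basis_vec i j = matvec (r * d) (blockdiag d r (fps_mat_inv d (\<lambda>p q. u p ^ q))) (wvec d r Y u a i j)"

lemma basis_vec_eq:
  assumes i: "i < d"
  shows "basis_vec i j q = (if q < r * d then vandermonde_inv d u (q mod d) i * Y_u i j (q div d) else 0)"
proof (cases "q < r * d")
  case True
  define V where "V = fps_mat_inv d (\<lambda>p q. u p ^ q)"
  define q0 where "q0 = q div d * d + i"
  have q0: "q0 < r * d" "q0 mod d = i" "q0 div d = q div d"
    unfolding q0_def using index_less_mult[OF less_mult_imp_div_less[OF True] i] i by simp_all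
  have char: "q' div d = q div d \<and> q' mod d = i \<longleftrightarrow> q' = q0" for q'
  proof
    assume "q' div d = q div d \<and> q' mod d = i"
    then show "q' = q0" unfolding q0_def using div_mult_mod_eq[of q' d] by simp
  qed (use q0 in simp)
  have "blockdiag d r V q q' * wvec d r Y u a i j q' = (if q' = q0 then V (q mod d) i * Y_u i j (q div d) else 0)"
    if "q' < r * d" for q'
    using that True char[of q'] q0 unfolding blockdiag_def wvec_def Y_u_def u_at_def
    by (cases "q' = q0") auto
  then have "basis_vec i j q = (\<Sum>q'<r * d. if q' = q0 then V (q mod d) i * Y_u i j (q div d) else 0)"
    unfolding basis_vec_def matvec_def V_def[symmetric] by (intro sum.cong refl) simp
  also have "\<dots> = V (q mod d) i * Y_u i j (q div d)" using q0(1) by simp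
  finally show ?thesis
    using True i fps_nodes.fps_mat_inv_vandermonde[OF fps_nodes_u, of "q mod d" i] unfolding V_def by simp
qed (simp add: basis_vec_def matvec_def blockdiag_def)

lemma basis_vec_nth:
  "i < d \<Longrightarrow> l < r \<Longrightarrow> p < d \<Longrightarrow> basis_vec i j (l * d + p) = vandermonde_inv d u p i * Y_u i j l"
  using basis_vec_eq[of i j "l * d + p"] index_less_mult[of l r p d] by simp

lemma branch_basis_vec:
  assumes i: "i < d" and i': "i' < d" and m: "m < r"
  shows "branch i' (basis_vec i j) m = (if i' = i then Y_u i j m else 0)"
proof -
  have "branch i' (basis_vec i j) m = (\<Sum>p<d. Y_u i j m * (u i' ^ p * vandermonde_inv d u p i))"
    unfolding branch_def by (intro sum.cong refl) (use basis_vec_nth[OF i m] in \<open>simp add: mult_ac\<close>)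
  also have "\<dots> = Y_u i j m * (\<Sum>p<d. u i' ^ p * vandermonde_inv d u p i)"
    by (simp add: sum_distrib_left)
  finally
  show ?thesis using fps_nodes.vandermonde_inv_right[OF fps_nodes_u i' i] by simp
qed

lemma compose_u_at_horiz_ode:
  assumes i: "i < d" and m: "m < r"
    and ode: "fps_deriv (Z m) + (\<Sum>l<r. recenter (G m l) (a i) * Z l) = 0"
  shows "fps_deriv (Z m oo u_at i) + fps_deriv (u i) * (\<Sum>l<r. G_u i m l * (Z l oo u_at i)) = 0"
proof -
  have u0: "u_at i $ 0 = 0" by (rule u_at_nth_0[OF i])
  have "fps_deriv (u_at i) = fps_deriv (u i)" unfolding u_at_def by simp
  then have "fps_deriv (Z m oo u_at i) = (fps_deriv (Z m) oo u_at i) * fps_deriv (u i)"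
    using fps_compose_deriv[OF u0] by simp
  also have "fps_deriv (Z m) = - (\<Sum>l<r. recenter (G m l) (a i) * Z l)"
    using ode by (simp add: eq_neg_iff_add_eq_0)
  finally show ?thesis
    unfolding G_u_def
    by (simp add: fps_compose_uminus fps_compose_sum_distrib fps_compose_mult_distrib[OF u0] sum_distrib_left mult_ac)
qed

lemma compose_f_at_horiz_ode:
  assumes i: "i < d" and m: "m < r"
    and ode: "fps_deriv (W m) + fps_deriv (u i) * (\<Sum>l<r. G_u i m l * W l) = 0"
  shows "fps_deriv (W m oo f_at i) + (\<Sum>l<r. recenter (G m l) (a i) * (W l oo f_at i)) = 0"
proof -
  have f0: "f_at i $ 0 = 0" by (rule f_at_nth_0[OF i])
  have chain: "(fps_deriv (u i) oo f_at i) * fps_deriv (f_at i) = 1"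
    using arg_cong[OF u_at_compose_f_at[OF i], of fps_deriv]
    unfolding fps_compose_deriv[OF f0] u_at_def by simp
  have G: "G_u i m l oo f_at i = recenter (G m l) (a i)" for l
    unfolding G_u_def using fps_compose_assoc[OF f0 u_at_nth_0[OF i]] u_at_compose_f_at[OF i] by simp
  have "fps_deriv (W m oo f_at i) = (fps_deriv (W m) oo f_at i) * fps_deriv (f_at i)"
    by (rule fps_compose_deriv[OF f0])
  also have "fps_deriv (W m) = - (fps_deriv (u i) * (\<Sum>l<r. G_u i m l * W l))"
    using ode by (simp add: eq_neg_iff_add_eq_0)
  finally have "fps_deriv (W m oo f_at i)
      = - (((fps_deriv (u i) oo f_at i) * fps_deriv (f_at i)) * (\<Sum>l<r. (G_u i m l oo f_at i) * (W l oo f_at i)))"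
    by (simp add: fps_compose_uminus fps_compose_sum_distrib fps_compose_mult_distrib[OF f0] mult_ac)
  then show ?thesis unfolding chain G by simp
qed

text \<open>The system \<open>D\<^sub>s C = 0\<close> at \<open>b\<close> is equivalent to the \<open>d\<close> systems \<open>D\<^sub>t = 0\<close> pulled back along the
  branches \<open>t = u\<^sub>i(s)\<close>, because the Vandermonde matrix \<open>(u\<^sub>i\<^sup>j)\<close> is invertible.\<close>

lemma Ds_formal_eq_0_iff_branches:
  "(\<forall>m<r. \<forall>j<d. Ds_formal C m j = 0) \<longleftrightarrow>
    (\<forall>i<d. \<forall>m<r. fps_deriv (branch i C m) + fps_deriv (u i) * (\<Sum>l<r. G_u i m l * branch i C l) = 0)"
proof (intro iffI allI impI)
  fix i m assume Ds: "\<forall>m<r. \<forall>j<d. Ds_formal C m j = 0" and "i < d" "m < r"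
  have "(\<Sum>j<d. Ds_formal C m j * u i ^ j) = 0" using Ds \<open>m < r\<close> by simp
  then show "fps_deriv (branch i C m) + fps_deriv (u i) * (\<Sum>l<r. G_u i m l * branch i C l) = 0"
    unfolding Ds_formal_along_u[OF \<open>i < d\<close> \<open>m < r\<close>] .
next
  fix m j
  assume br: "\<forall>i<d. \<forall>m<r. fps_deriv (branch i C m) + fps_deriv (u i) * (\<Sum>l<r. G_u i m l * branch i C l) = 0"
    and "m < r" "j < d"
  have "(\<Sum>j<d. Ds_formal C m j * u i ^ j) = 0" if "i < d" for i
    unfolding Ds_formal_along_u[OF that \<open>m < r\<close>] using br that \<open>m < r\<close> by blast
  then show "Ds_formal C m j = 0" using \<open>j < d\<close> by (rule fps_nodes.vandermonde_eq_0[OF fps_nodes_u])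
qed

lemma eq_if_branches_eq:
  assumes "\<forall>q\<ge>r * d. C q = 0" "\<forall>q\<ge>r * d. C' q = 0"
    and branches: "\<And>i m. i < d \<Longrightarrow> m < r \<Longrightarrow> branch i C m = branch i C' m"
  shows "C = C'"
proof
  fix q
  show "C q = C' q"
  proof (cases "q < r * d")
    case True
    then have m: "q div d < r" and "0 < d" by (simp_all add: less_mult_imp_div_less) (cases d, auto)
    then have "q mod d < d" by simp
    moreover have "(\<Sum>j<d. (C (q div d * d + j) - C' (q div d * d + j)) * u i ^ j) = 0" if "i < d" for i
      using branches[OF that m] unfolding branch_def by (simp add: left_diff_distrib sum_subtractf)
    ultimately have "C (q div d * d + q mod d) - C' (q div d * d + q mod d) = 0"
      by (rule fps_nodes.vandermonde_eq_0[OF fps_nodes_u, rotated])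
    then show ?thesis by simp
  qed (use assms in simp)
qed

lemma Y_horiz:
  assumes "i < d" "j < r"
  shows "\<forall>l\<ge>r. Y i j l = 0" "\<forall>l<r. conv_germ (Y i j l)"
    "\<forall>m<r. fps_deriv (Y i j m) + (\<Sum>l<r. recenter (G m l) (a i) * Y i j l) = 0"
  using Y_basis assms horiz_t_iff[OF a_in_disc] unfolding fam_basis_def by auto

lemma conv_germ_Y_u: "i < d \<Longrightarrow> j < r \<Longrightarrow> conv_germ (Y_u i j l)"
  unfolding Y_u_def using Y_horiz(1,2) conv_germ_0
  by (cases "l < r") (auto intro: conv_germ_compose[OF u_at_nth_0 conv_germ_u_at])

lemma basis_vec_horiz:
  assumes i: "i < d" and j: "j < r"
  shows "basis_vec i j \<in> horiz_s opn v r d f G b"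
  unfolding horiz_s_iff Ds_formal_eq_0_iff_branches
proof (intro conjI allI impI)
  show "basis_vec i j q = 0" if "r * d \<le> q" for q using basis_vec_eq[OF i] that by simp
  show "conv_germ (basis_vec i j q)" if "q < r * d" for q
    using that basis_vec_eq[OF i] i
    by (simp add: conv_germ_mult conv_germ_vandermonde_inv conv_germ_Y_u[OF i j])
  show "fps_deriv (branch i' (basis_vec i j) m)
      + fps_deriv (u i') * (\<Sum>l<r. G_u i' m l * branch i' (basis_vec i j) l) = 0"
    if i': "i' < d" and m: "m < r" for i' m
  proof -
    have "(\<Sum>l<r. G_u i' m l * branch i' (basis_vec i j) l) = (\<Sum>l<r. G_u i' m l * (if i' = i then Y_u i j l else 0))"
      by (rule sum.cong[OF refl]) (simp add: branch_basis_vec[OF i i'])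
    then show ?thesis
      using compose_u_at_horiz_ode[OF i m Y_horiz(3)[OF i j, rule_format, OF m]]
      by (simp add: branch_basis_vec[OF i i' m] Y_u_def)
  qed
qed

lemma branch_sum:
  "branch i (\<lambda>q. \<Sum>x\<in>S. fps_const (c x) * B x q) m = (\<Sum>x\<in>S. fps_const (c x) * branch i (B x) m)"
  unfolding branch_def sum_distrib_right sum_distrib_left
  by (subst sum.swap) (simp add: mult_ac)

lemma branch_basis_lincomb:
  assumes i': "i' < d" and m: "m < r"
  shows "branch i' (\<lambda>q. \<Sum>x\<in>{..<d} \<times> {..<r}. fps_const (c x) * (\<lambda>(i, j). basis_vec i j) x q) m
    = (\<Sum>j<r. fps_const (c (i', j)) * Y_u i' j m)"
proof -
  have "branch i' (\<lambda>q. \<Sum>x\<in>{..<d} \<times> {..<r}. fps_const (c x) * (\<lambda>(i, j). basis_vec i j) x q) m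
      = (\<Sum>i<d. \<Sum>j<r. fps_const (c (i, j)) * branch i' (basis_vec i j) m)"
    unfolding branch_sum sum.cartesian_product by (simp add: case_prod_beta)
  also have "\<dots> = (\<Sum>i<d. if i' = i then \<Sum>j<r. fps_const (c (i, j)) * Y_u i j m else 0)"
    by (intro sum.cong refl) (simp add: branch_basis_vec[OF _ i' m])
  finally show ?thesis using i' by simp
qed

lemma Y_u_lincomb:
  "i < d \<Longrightarrow> (\<Sum>j<r. fps_const (c j) * Y_u i j m) = (\<Sum>j<r. fps_const (c j) * Y i j m) oo u_at i"
  unfolding Y_u_def using u_at_nth_0 by (simp add: fps_compose_sum_distrib fps_compose_mult_distrib)

lemma basis_vec_independent:
  assumes zero: "\<forall>q. (\<Sum>x\<in>{..<d} \<times> {..<r}. fps_const (c x) * (\<lambda>(i, j). basis_vec i j) x q) = 0"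
    and x: "x \<in> {..<d} \<times> {..<r}"
  shows "c x = 0"
proof -
  obtain i j0 where x': "x = (i, j0)" and i: "i < d" and j0: "j0 < r" using x by auto
  have sums: "(\<Sum>j<r. fps_const (c (i, j)) * Y i j l) = 0" for l
  proof (cases "l < r")
    case True
    have "(\<Sum>j<r. fps_const (c (i, j)) * Y i j l) oo u_at i = 0"
      using branch_basis_lincomb[OF i True, of c] zero unfolding Y_u_lincomb[OF i] branch_def by simp
    then show ?thesis using fps_compose_eq_0_iff[OF u_at_nth_0[OF i]] u_at_nonzero[OF i] by simp
  qed (use Y_horiz(1)[OF i] in simp)
  have indep: "(\<forall>l. (\<Sum>j\<in>{..<r}. fps_const (c' j) * Y i j l) = 0) \<Longrightarrow> j \<in> {..<r} \<Longrightarrow> c' j = 0" for c' j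
    using Y_basis i unfolding fam_basis_def by blast
  show ?thesis unfolding x' by (rule indep[of "\<lambda>j. c (i, j)" j0]) (use sums j0 in simp_all)
qed

text \<open>A horizontal \<open>C\<close> at \<open>b\<close>, read on the branch \<open>t = u\<^sub>i(s)\<close> and pulled back to \<open>t\<close>, is horizontal at
  \<open>a\<^sub>i\<close>; expanding it in the basis \<open>Y\<^sub>a\<^sub>i\<^sub>,\<^sub>j\<close> and reading back along the branches expresses \<open>C\<close>.\<close>

lemma branch_compose_f_at_horiz:
  assumes C: "C \<in> horiz_s opn v r d f G b" and i: "i < d"
  shows "(\<lambda>l. branch i C l oo f_at i) \<in> horiz_t opn v r G (a i)"
  unfolding horiz_t_iff[OF a_in_disc[OF i]]
proof (intro conjI allI impI)
  have zero: "\<forall>q\<ge>r * d. C q = 0" and germ: "\<forall>q<r * d. conv_germ (C q)"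
    and ode: "\<forall>m<r. fps_deriv (branch i C m) + fps_deriv (u i) * (\<Sum>l<r. G_u i m l * branch i C l) = 0"
    using C i unfolding horiz_s_iff Ds_formal_eq_0_iff_branches by auto
  show "branch i C l oo f_at i = 0" if "r \<le> l" for l
    using zero that unfolding branch_def by (simp add: trans_le_add1)
  show "conv_germ (branch i C l oo f_at i)" if "l < r" for l
    using germ that index_less_mult[OF that] unfolding branch_def
    by (intro conv_germ_compose[OF f_at_nth_0[OF i] conv_germ_f_at[OF i]] conv_germ_sum conv_germ_mult
        conv_germ_power u_branch_near0(1)[OF i]) simp_all
  show "fps_deriv (branch i C m oo f_at i) + (\<Sum>l<r. recenter (G m l) (a i) * (branch i C l oo f_at i)) = 0"
    if "m < r" for m
    using compose_f_at_horiz_ode[OF i that] ode that by blast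
qed

lemma basis_vec_spanning:
  assumes C: "C \<in> horiz_s opn v r d f G b"
  obtains c where "\<And>q. C q = (\<Sum>x\<in>{..<d} \<times> {..<r}. fps_const (c x) * (\<lambda>(i, j). basis_vec i j) x q)"
proof -
  have "\<exists>ci. i < d \<longrightarrow> (\<forall>l. branch i C l oo f_at i = (\<Sum>j<r. fps_const (ci j) * Y i j l))" for i
  proof (cases "i < d")
    case True
    have "\<forall>Z\<in>horiz_t opn v r G (a i). \<exists>c. \<forall>l. Z l = (\<Sum>j\<in>{..<r}. fps_const (c j) * Y i j l)"
      using Y_basis True unfolding fam_basis_def by blast
    from bspec[OF this branch_compose_f_at_horiz[OF C True]] show ?thesis by simp
  qed simp
  then have "\<forall>i. \<exists>ci. i < d \<longrightarrow> (\<forall>l. branch i C l oo f_at i = (\<Sum>j<r. fps_const (ci j) * Y i j l))" ..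
  then obtain ci where ci: "\<And>i l. i < d \<Longrightarrow> branch i C l oo f_at i = (\<Sum>j<r. fps_const (ci i j) * Y i j l)"
    using choice[of "\<lambda>i ci. i < d \<longrightarrow> (\<forall>l. branch i C l oo f_at i = (\<Sum>j<r. fps_const (ci j) * Y i j l))"]
    by blast
  have branch_C: "branch i C m = (\<Sum>j<r. fps_const (ci i j) * Y_u i j m)" if "i < d" for i m
  proof -
    have "branch i C m = (branch i C m oo f_at i) oo u_at i"
      using fps_compose_assoc[OF u_at_nth_0[OF that] f_at_nth_0[OF that]] f_at_compose_u_at[OF that] by simp
    then show ?thesis unfolding ci[OF that] Y_u_lincomb[OF that] .
  qed
  define S where "S = (\<lambda>q. \<Sum>x\<in>{..<d} \<times> {..<r}. fps_const (case_prod ci x) * (\<lambda>(i, j). basis_vec i j) x q)"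
  have "C = S"
  proof (rule eq_if_branches_eq)
    show "\<forall>q\<ge>r * d. C q = 0" using C unfolding horiz_s_iff by blast
    show "\<forall>q\<ge>r * d. S q = 0"
    proof (intro allI impI)
      fix q assume "r * d \<le> q"
      then have "(\<lambda>(i, j). basis_vec i j) x q = 0" if "x \<in> {..<d} \<times> {..<r}" for x
        using that basis_vec_eq by auto
      then show "S q = 0" unfolding S_def by simp
    qed
    show "branch i C m = branch i S m" if "i < d" "m < r" for i m
      using branch_basis_lincomb[OF that, of "case_prod ci"] branch_C[OF that(1)] unfolding S_def by simp
  qed
  then show ?thesis using that unfolding S_def by blast
qed

theorem horiz_s_basis: "fam_basis (horiz_s opn v r d f G b) (\<lambda>(i, j). basis_vec i j) ({..<d} \<times> {..<r})"
  unfolding fam_basis_def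
proof (intro conjI ballI allI impI)
  show "(\<lambda>(i, j). basis_vec i j) x \<in> horiz_s opn v r d f G b" if "x \<in> {..<d} \<times> {..<r}" for x
    using that basis_vec_horiz by auto
  show "c x = 0" if "\<forall>l. (\<Sum>x\<in>{..<d} \<times> {..<r}. fps_const (c x) * (\<lambda>(i, j). basis_vec i j) x l) = 0"
    and "x \<in> {..<d} \<times> {..<r}" for c x
    using basis_vec_independent that by blast
  show "\<exists>c. \<forall>l. C l = (\<Sum>x\<in>{..<d} \<times> {..<r}. fps_const (c x) * (\<lambda>(i, j). basis_vec i j) x l)"
    if "C \<in> horiz_s opn v r d f G b" for C
    using basis_vec_spanning[OF that] by blast
qed (simp)

end

lemma padic_base_field_nonarch_abs_field:
  fixes v :: "'k::field_char_0 \<Rightarrow> real"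
  assumes "padic_base_field p v"
  shows "nonarch_abs_field v"
proof -
  have abs: "nonarch_abs v" and complete: "v_complete v" and padic: "extends_padic p v"
    using assms unfolding padic_base_field_def by auto
  have p: "prime p" and v_int: "\<And>n::int. n \<noteq> 0 \<Longrightarrow> v (of_int n) = real p powr (- real (multiplicity (int p) n))"
    using padic unfolding extends_padic_def by auto
  have p1: "real p > 1" using prime_gt_1_nat[OF p] by simp
  have "\<exists>z. 0 < v z \<and> v z < e" if e: "e > 0" for e
  proof -
    obtain n where n: "inverse (real p ^ n) < e"
      using order_tendstoD(2)[OF LIMSEQ_inverse_realpow_zero[OF p1] e] unfolding eventually_sequentially by blast
    have "v (of_int (int p ^ n) :: 'k) = real p powr (- real n)"
      using v_int[of "int p ^ n"] multiplicity_prime_power[of "int p" n] p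
      by (simp add: prime_imp_prime_elem prime_gt_0_nat)
    also have "\<dots> = inverse (real p ^ n)" using p1 by (simp add: powr_minus powr_realpow)
    finally show ?thesis using n p1 by (intro exI[of _ "of_int (int p ^ n) :: 'k"]) simp
  qed
  then show ?thesis
    using abs complete unfolding nonarch_abs_def by unfold_locales auto
qed

theorem theorem3p12:
  fixes v :: "'k::field_char_0 \<Rightarrow> real" and p :: nat and opn :: bool
    and f :: "'k fps" and d r :: nat and P :: "nat \<Rightarrow> 'k fps"
    and b :: 'k and a :: "nat \<Rightarrow> 'k" and u :: "nat \<Rightarrow> 'k fps"
    and G :: "nat \<Rightarrow> nat \<Rightarrow> 'k fps" and Y :: "nat \<Rightarrow> nat \<Rightarrow> nat \<Rightarrow> 'k fps"
  assumes "padic_base_field p v"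
    and "finite_etale_disc opn v f d"
    and "\<forall>j<d. inO opn v (P j)"
    and "\<forall>x\<in>disc opn v. (\<Sum>j<d. feval v (P j) (feval v f x) * x ^ j) + x ^ d = 0"
    and "b \<in> disc opn v"
    and "inj_on a {..<d}"
    and "a ` {..<d} = {x \<in> disc opn v. feval v f x = b}"
    and "\<forall>i<d. fps_nth (u i) 0 = a i \<and> (\<exists>\<rho>>0. \<rho> \<le> 1 \<and> conv_ball v (u i) \<rho> \<and>
           (\<forall>y. v (y - b) < \<rho> \<longrightarrow>
              (\<Sum>j<d. feval v (P j) y * feval v (u i) (y - b) ^ j) + feval v (u i) (y - b) ^ d = 0))"
    and "\<forall>m<r. \<forall>l<r. inO opn v (G m l)"
    and "\<forall>i<d. fam_basis (horiz_t opn v r G (a i)) (Y i) {..<r}"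
  shows "fam_basis (horiz_s opn v r d f G b)
           (\<lambda>(i, j). matvec (r * d) (blockdiag d r (fps_mat_inv d (\<lambda>p q. u p ^ q))) (wvec d r Y u a i j))
           ({..<d} \<times> {..<r})"
proof -
  interpret etale_setting v opn f d r P b a u G Y
    using padic_base_field_nonarch_abs_field[OF assms(1)] assms(2-)
    by (intro etale_setting.intro etale_setting_axioms.intro) auto
  show ?thesis using horiz_s_basis unfolding basis_vec_def .
qed

end
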